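(* Let $\{X_n,n\geq1\}$ be a $\varphi$-mixing sequence of random variables with common marginal distribution function $F$, whose mixing coefficients satisfy $\varphi(n)=O(n^{-3})$, and assume $P(X_i=X_j)=0$ for all $i\neq j$. Fix $p\in(0,1)$, let $\xi_p=\inf\{x:F(x)\geq p\}$ and $\xi_{p,n}=\inf\{x:F_n(x)\geq p\}$. Assume that $F$ possesses a positive continuous density $f$ in a neighborhood $\mathscr{N}_p$ of $\xi_p$ such that $0<\sup\{f(x):x\in\mathscr{N}_p\}<\infty$, and that $f'$ exists and is bounded on $\mathscr{N}_p$. Then with probability 1, $$\xi_{p,n}=\xi_p-\frac{F_n(\xi_p)-p}{f(\xi_p)}+O\big(n^{-3/4}\log n\big),\quad n\to\infty.$$
   Context: All random variables are defined on a probability space $(\Omega,\mathcal{F},P)$. $F_n(x)=\frac1n\sum_{i=1}^n I(X_i\leq x)$ is the empirical distribution function of $X_1,\dots,X_n$. For $n\leq m$ let $\mathcal{F}_n^m=\sigma(X_i,n\leq i\leq m)$. For sub-$\sigma$-algebras $\mathcal{B},\mathcal{R}$ let $\varphi(\mathcal{B},\mathcal{R})=\sup_{A\in\mathcal{B},B\in\mathcal{R},P(A)>0}|P(B\mid A)-P(B)|$, and the mixing coefficients are $\varphi(n)=\sup_{k\geq1}\varphi(\mathcal{F}_1^k,\mathcal{F}_{k+n}^\infty)$. The sequence is called $\varphi$-mixing if $\varphi(n)\downarrow0$ as $n\to\infty$. *)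

theory Defs
  imports "HOL-Probability.Probability" "HOL-Library.Landau_Symbols"
begin

definition gen_sigma :: "'a measure \<Rightarrow> (nat \<Rightarrow> 'a \<Rightarrow> real) \<Rightarrow> nat set \<Rightarrow> 'a set set" where
  "gen_sigma M X I = sigma_sets (space M) {X i -` B \<inter> space M | i B. i \<in> I \<and> B \<in> sets borel}"

definition phi_sigma :: "'a measure \<Rightarrow> 'a set set \<Rightarrow> 'a set set \<Rightarrow> real" where
  "phi_sigma M \<B> \<R> = (SUP AB \<in> {(A, B). A \<in> \<B> \<and> B \<in> \<R> \<and> measure M A > 0}.
       \<bar>measure M (snd AB \<inter> fst AB) / measure M (fst AB) - measure M (snd AB)\<bar>)"

definition phi_mix :: "'a measure \<Rightarrow> (nat \<Rightarrow> 'a \<Rightarrow> real) \<Rightarrow> nat \<Rightarrow> real" where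
  "phi_mix M X n = (SUP k \<in> {1..}. phi_sigma M (gen_sigma M X {1..k}) (gen_sigma M X {k+n..}))"

definition emp_df :: "(nat \<Rightarrow> 'a \<Rightarrow> real) \<Rightarrow> nat \<Rightarrow> 'a \<Rightarrow> real \<Rightarrow> real" where
  "emp_df X n \<omega> x = (1 / real n) * (\<Sum>i=1..n. if X i \<omega> \<le> x then 1 else 0)"

definition quantile :: "(real \<Rightarrow> real) \<Rightarrow> real \<Rightarrow> real" where
  "quantile G p = Inf {x. G x \<ge> p}"

end

theory Submission
  imports Defs "HOL-Real_Asymp.Real_Asymp"
begin

(*
  Write F_n for the empirical distribution function and xi for xi_p. The whole argument rests on
  exponential tail bounds for sums of centred indicators 1{X_i in B} - P(X_i in B). To obtain them,
  {1..n} is cut into blocks of length about n^(1/4) and the odd and the even blocks are treated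
  separately: consecutive blocks of equal parity are n^(1/4) indices apart, so by the mixing
  inequality P(A and C) <= P(A) (P(C) + phi(m)) the moment generating function of their sum
  factorises up to an error phi(n^(1/4)) = O(n^(-3/4)) per block, while each block contributes a
  factor 1 + O(u^2 L P(B)) by a second-moment bound.

  Applied to B = (-inf, x] at x = xi +- a_n, a_n ~ n^(-1/2) log n, and to the intervals between xi
  and the points of a grid of mesh n^(-3/4) in [xi - a_n, xi + a_n], these bounds make the
  probability of the "bad" event O(n^(-2)). By Borel-Cantelli, almost surely for all large n the
  sample quantile lies within a_n of xi, and F_n - F varies by O(n^(-3/4) log n) between xi and any
  point of that interval. A first-order Taylor expansion of F at xi then turns the quantile relation
  F_n(xi_n) = p + O(1/n) into the representation.
*)

lemma exp_le_1_plus_x_plus_sq: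
  fixes x :: real
  assumes "\<bar>x\<bar> \<le> 1"
  shows "exp x \<le> 1 + x + x\<^sup>2"
proof (cases "x \<ge> 0")
  case True
  then show ?thesis using exp_bound[of x] assms by auto
next
  case False
  define y where "y = - x"
  have y: "0 \<le> y" "y \<le> 1" using False assms by (auto simp: y_def)
  have pos: "0 < 1 + y + y\<^sup>2 / 2" using y by (simp add: add_pos_nonneg)
  have "(1 - y + y\<^sup>2) * (2 + 2 * y + y\<^sup>2) = 2 + y\<^sup>2 + y^3 + y^4"
    by (simp add: algebra_simps power2_eq_square power3_eq_cube power4_eq_xxxx)
  also have "\<dots> \<ge> 2" using y by simp
  finally have "1 / (1 + y + y\<^sup>2 / 2) \<le> 1 - y + y\<^sup>2" using pos by (simp add: field_simps)
  moreover have "1 / exp y \<le> 1 / (1 + y + y\<^sup>2 / 2)"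
    using exp_lower_Taylor_quadratic[OF y(1)] pos by (intro divide_left_mono) auto
  ultimately show ?thesis by (simp add: y_def exp_minus field_simps)
qed

lemma exp_diff_mult_ln: "0 < x \<Longrightarrow> exp (c - real k * ln x) = exp c / x ^ k"
  by (simp add: exp_diff exp_of_nat_mult)

lemma bigo_const_mult: "f \<in> O[F](g) \<Longrightarrow> (\<lambda>x. c * f x) \<in> O[F](g)"
  by (cases "c = 0") simp_all

lemma abs_diff_le_between:
  fixes G H :: "real \<Rightarrow> real"
  assumes "G u \<le> G z" "G z \<le> G v" "\<bar>G u - H u\<bar> \<le> \<delta>" "\<bar>G v - H v\<bar> \<le> \<delta>"
    and "H v - H z \<le> \<epsilon>" "H z - H u \<le> \<epsilon>"
  shows "\<bar>G z - H z\<bar> \<le> \<delta> + \<epsilon>"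
  using assms by (simp add: abs_le_iff)

lemma taylor_bound_first_order:
  fixes F f f' :: "real \<Rightarrow> real"
  assumes F: "\<And>x. x \<in> {c-d..c+d} \<Longrightarrow> (F has_real_derivative f x) (at x)"
    and f: "\<And>x. x \<in> {c-d..c+d} \<Longrightarrow> (f has_real_derivative f' x) (at x)"
    and f': "\<And>x. x \<in> {c-d..c+d} \<Longrightarrow> \<bar>f' x\<bar> \<le> K"
    and x: "x \<in> {c-d..c+d}"
  shows "\<bar>F x - F c - f c * (x - c)\<bar> \<le> K * (x - c)\<^sup>2"
proof -
  have c: "c \<in> {c-d..c+d}" using x by auto
  have seg: "closed_segment c x \<subseteq> {c-d..c+d}"
    using c x by (simp add: closed_segment_eq_real_ivl split: if_splits)
  have f_lip: "norm (f y - f c) \<le> K * norm (y - c)" if "y \<in> {c-d..c+d}" for y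
  proof (rule field_differentiable_bound[where S="{c-d..c+d}" and f'=f'])
    show "(f has_field_derivative f' z) (at z within {c-d..c+d})" if "z \<in> {c-d..c+d}" for z
      using f[OF that] by (rule has_field_derivative_at_within)
  qed (use f' that c in auto)
  have "norm ((F x - f c * x) - (F c - f c * c)) \<le> (K * \<bar>x - c\<bar>) * norm (x - c)"
  proof (rule field_differentiable_bound[where S="closed_segment c x" and f'="\<lambda>y. f y - f c"])
    show "((\<lambda>y. F y - f c * y) has_field_derivative f z - f c) (at z within closed_segment c x)"
      if "z \<in> closed_segment c x" for z
      using has_field_derivative_at_within[OF F[OF subsetD[OF seg that]]]
      by (auto intro!: derivative_eq_intros)
    show "norm (f z - f c) \<le> K * \<bar>x - c\<bar>" if "z \<in> closed_segment c x" for z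
    proof -
      have "norm (f z - f c) \<le> K * \<bar>z - c\<bar>" using f_lip[OF subsetD[OF seg that]] by simp
      also have "\<dots> \<le> K * \<bar>x - c\<bar>"
        using that f'[OF c] by (intro mult_left_mono) (auto simp: closed_segment_eq_real_ivl split: if_splits)
      finally show ?thesis .
    qed
  qed auto
  then show ?thesis by (simp add: power2_eq_square algebra_simps abs_mult_self)
qed

section \<open>The mixing inequality\<close>

lemma sigma_algebra_gen_sigma: "sigma_algebra (space M) (gen_sigma M X I)"
  unfolding gen_sigma_def by (rule sigma_algebra_sigma_sets) auto

lemma gen_sigma_subset_sets:
  assumes "\<And>i. X i \<in> borel_measurable M"
  shows "gen_sigma M X I \<subseteq> sets M"
  unfolding gen_sigma_def
  by (rule sets.sigma_sets_subset) (auto intro: measurable_sets assms)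

lemma gen_sigma_mono: "I \<subseteq> J \<Longrightarrow> gen_sigma M X I \<subseteq> gen_sigma M X J"
  unfolding gen_sigma_def by (rule sigma_sets_subseteq) blast

lemma vimage_in_gen_sigma: "i \<in> I \<Longrightarrow> B \<in> sets borel \<Longrightarrow> X i -` B \<inter> space M \<in> gen_sigma M X I"
  unfolding gen_sigma_def by (rule sigma_sets.Basic) blast

lemma space_in_gen_sigma: "space M \<in> gen_sigma M X I"
  unfolding gen_sigma_def by (rule sigma_sets_top)

context prob_space
begin

lemma cond_prob_deviation_le_1:
  assumes "A \<in> sets M" "C \<in> sets M" "prob A > 0"
  shows "\<bar>prob (C \<inter> A) / prob A - prob C\<bar> \<le> 1"
proof -
  have "prob (C \<inter> A) \<le> prob A" using assms by (intro finite_measure_mono) auto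
  then have "0 \<le> prob (C \<inter> A) / prob A" "prob (C \<inter> A) / prob A \<le> 1" using assms(3) by auto
  then show ?thesis using prob_le_1[of C] measure_nonneg[of M C] by linarith
qed

lemma cond_prob_deviation_le_phi_sigma:
  assumes "\<B> \<subseteq> sets M" "\<R> \<subseteq> sets M" and "A \<in> \<B>" "C \<in> \<R>" "prob A > 0"
  shows "\<bar>prob (C \<inter> A) / prob A - prob C\<bar> \<le> phi_sigma M \<B> \<R>"
proof -
  have "bdd_above ((\<lambda>(A, C). \<bar>prob (C \<inter> A) / prob A - prob C\<bar>) `
      {(A, C). A \<in> \<B> \<and> C \<in> \<R> \<and> prob A > 0})"
    using assms(1,2) by (intro bdd_aboveI[where M=1]) (auto intro!: cond_prob_deviation_le_1)
  from cSUP_upper[OF _ this, of "(A, C)"] show ?thesis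
    using assms(3-5) unfolding phi_sigma_def by (simp add: case_prod_beta')
qed

lemma phi_sigma_le_1:
  assumes "\<B> \<subseteq> sets M" "\<R> \<subseteq> sets M" "space M \<in> \<B>" "space M \<in> \<R>"
  shows "phi_sigma M \<B> \<R> \<le> 1"
  unfolding phi_sigma_def
proof (rule cSUP_least)
  show "{(A, C). A \<in> \<B> \<and> C \<in> \<R> \<and> prob A > 0} \<noteq> {}"
    using assms sets.top[of M] by (intro notI) (auto simp: prob_space dest: subsetD)
qed (use assms in \<open>auto intro!: cond_prob_deviation_le_1\<close>)

lemma phi_sigma_nonneg:
  assumes "\<B> \<subseteq> sets M" "\<R> \<subseteq> sets M" "space M \<in> \<B>" "space M \<in> \<R>"
  shows "0 \<le> phi_sigma M \<B> \<R>"
  using cond_prob_deviation_le_phi_sigma[OF assms] by (simp add: prob_space)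

lemma phi_sigma_le_phi_mix:
  assumes rv: "\<And>i. X i \<in> borel_measurable M" and k: "k \<ge> 1"
  shows "phi_sigma M (gen_sigma M X {1..k}) (gen_sigma M X {k+m..}) \<le> phi_mix M X m"
  unfolding phi_mix_def
  by (rule cSUP_upper, use k in simp)
     (auto intro!: bdd_aboveI[where M=1] phi_sigma_le_1 gen_sigma_subset_sets rv space_in_gen_sigma)

lemma phi_mix_nonneg: "(\<And>i. X i \<in> borel_measurable M) \<Longrightarrow> 0 \<le> phi_mix M X m"
  using phi_sigma_le_phi_mix[where X=X and k=1 and m=m]
    phi_sigma_nonneg[OF gen_sigma_subset_sets gen_sigma_subset_sets space_in_gen_sigma space_in_gen_sigma]
  by (meson order_trans order_refl)

lemma phi_mix_le_1: "(\<And>i. X i \<in> borel_measurable M) \<Longrightarrow> phi_mix M X m \<le> 1"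
  unfolding phi_mix_def
  by (rule cSUP_least) (auto intro!: phi_sigma_le_1 gen_sigma_subset_sets space_in_gen_sigma)

text \<open>The defining inequality of \<open>\<phi>\<close>-mixing, in a form that also covers events of probability zero.\<close>

lemma prob_inter_le_phi_mix:
  assumes rv: "\<And>i. X i \<in> borel_measurable M"
    and k: "k \<ge> 1" and A: "A \<in> gen_sigma M X {1..k}" and C: "C \<in> gen_sigma M X {k+m..}"
  shows "prob (A \<inter> C) \<le> prob A * (prob C + phi_mix M X m)"
proof (cases "prob A > 0")
  case True
  have "\<bar>prob (C \<inter> A) / prob A - prob C\<bar> \<le> phi_mix M X m"
    using cond_prob_deviation_le_phi_sigma[OF gen_sigma_subset_sets[of X, OF rv]
        gen_sigma_subset_sets[of X, OF rv] A C True] phi_sigma_le_phi_mix[where X=X and m=m, OF rv k] by linarith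
  then have "prob (C \<inter> A) / prob A \<le> prob C + phi_mix M X m" by linarith
  then show ?thesis using True by (simp add: Int_commute field_simps)
next
  case False
  have "A \<in> sets M" "C \<in> sets M" using A C gen_sigma_subset_sets[of X, OF rv] by auto
  then have "prob (A \<inter> C) \<le> prob A" by (intro finite_measure_mono) auto
  then show ?thesis using False measure_nonneg[of M A] by simp
qed

lemma sum_phi_mix_le:
  assumes rv: "\<And>i. X i \<in> borel_measurable M" and Phi: "\<And>D. (\<Sum>d=1..D. phi_mix M X d) \<le> \<Phi>"
    and J: "finite J" "J \<subseteq> {1..N}"
  shows "(\<Sum>j\<in>J. phi_mix M X j) \<le> \<Phi>"
proof -
  have "(\<Sum>j\<in>J. phi_mix M X j) \<le> (\<Sum>d=1..N. phi_mix M X d)"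
    using J phi_mix_nonneg[of X, OF rv] by (intro sum_mono2) auto
  also have "\<dots> \<le> \<Phi>" by (rule Phi)
  finally show ?thesis .
qed

text \<open>Only the finitely many \<open>F K\<close> that are positively correlated with \<open>E\<close> matter; their union is a
  single event of the future \<open>\<sigma>\<close>-algebra, to which the mixing inequality applies.\<close>

lemma weighted_sum_prob_inter_le:
  assumes rv: "\<And>i. X i \<in> borel_measurable M"
    and k: "k \<ge> 1" and E: "E \<in> gen_sigma M X {1..k}" and fin: "finite \<K>"
    and F: "\<And>K. K \<in> \<K> \<Longrightarrow> F K \<in> gen_sigma M X {k+m..}" and disj: "disjoint_family_on F \<K>"
    and d: "\<And>K. K \<in> \<K> \<Longrightarrow> 0 \<le> d K \<and> d K \<le> Z" and Z: "Z \<ge> 0"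
  shows "(\<Sum>K\<in>\<K>. d K * prob (E \<inter> F K)) \<le> prob E * ((\<Sum>K\<in>\<K>. d K * prob (F K)) + phi_mix M X m * Z)"
proof -
  define \<delta> where "\<delta> K = prob (E \<inter> F K) - prob E * prob (F K)" for K
  define Pos where "Pos = {K\<in>\<K>. 0 < \<delta> K}"
  define U where "U = (\<Union>K\<in>Pos. F K)"
  have Pos: "finite Pos" "Pos \<subseteq> \<K>" using fin by (auto simp: Pos_def)
  have Fs: "F K \<in> sets M" if "K \<in> \<K>" for K using F[OF that] gen_sigma_subset_sets[of X, OF rv] by blast
  have Es: "E \<in> sets M" using E gen_sigma_subset_sets[of X, OF rv] by blast
  interpret future: sigma_algebra "space M" "gen_sigma M X {k+m..}" by (rule sigma_algebra_gen_sigma)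
  have U: "U \<in> gen_sigma M X {k+m..}" unfolding U_def using Pos F by blast
  have disjP: "disjoint_family_on F Pos" using Pos(2) disj by (rule disjoint_family_on_mono)
  have prob_U: "prob U = (\<Sum>K\<in>Pos. prob (F K))"
    unfolding U_def by (rule finite_measure_finite_Union[OF Pos(1) _ disjP]) (use Fs Pos in auto)
  have prob_EU: "prob (E \<inter> U) = (\<Sum>K\<in>Pos. prob (E \<inter> F K))"
  proof -
    have "E \<inter> U = (\<Union>K\<in>Pos. E \<inter> F K)" by (auto simp: U_def)
    moreover have "disjoint_family_on (\<lambda>K. E \<inter> F K) Pos"
      using disjP by (auto simp: disjoint_family_on_def)
    moreover have "(\<lambda>K. E \<inter> F K) ` Pos \<subseteq> sets M" using Fs Pos(2) Es by auto
    ultimately show ?thesis using finite_measure_finite_Union[OF Pos(1)] by metis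
  qed
  have "(\<Sum>K\<in>\<K>. d K * \<delta> K) \<le> (\<Sum>K\<in>\<K>. if K \<in> Pos then Z * \<delta> K else 0)"
    using d by (intro sum_mono) (auto simp: Pos_def mult_right_mono mult_nonneg_nonpos)
  also have "\<dots> = Z * (prob (E \<inter> U) - prob E * prob U)"
    using fin by (simp add: Pos_def sum.inter_filter[symmetric] prob_EU prob_U \<delta>_def
        sum_distrib_left sum_subtractf right_diff_distrib)
  also have "\<dots> \<le> Z * (prob E * phi_mix M X m)"
    using prob_inter_le_phi_mix[OF rv k E U] Z by (intro mult_left_mono) (auto simp: algebra_simps)
  finally have "(\<Sum>K\<in>\<K>. d K * \<delta> K) \<le> Z * (prob E * phi_mix M X m)" .
  then show ?thesis
    by (simp add: \<delta>_def algebra_simps sum.distrib sum_distrib_left sum_subtractf)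
qed

lemma double_weighted_sum_prob_inter_le:
  assumes rv: "\<And>i. X i \<in> borel_measurable M"
    and k: "k \<ge> 1" and E: "\<And>J. J \<in> \<J> \<Longrightarrow> E J \<in> gen_sigma M X {1..k}" and fin: "finite \<K>"
    and F: "\<And>K. K \<in> \<K> \<Longrightarrow> F K \<in> gen_sigma M X {k+m..}" and disj: "disjoint_family_on F \<K>"
    and c: "\<And>J. J \<in> \<J> \<Longrightarrow> 0 \<le> c J"
    and d: "\<And>K. K \<in> \<K> \<Longrightarrow> 0 \<le> d K \<and> d K \<le> Z" and Z: "Z \<ge> 0"
  shows "(\<Sum>J\<in>\<J>. \<Sum>K\<in>\<K>. c J * d K * prob (E J \<inter> F K))
     \<le> (\<Sum>J\<in>\<J>. c J * prob (E J)) * ((\<Sum>K\<in>\<K>. d K * prob (F K)) + phi_mix M X m * Z)"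
proof -
  have "(\<Sum>J\<in>\<J>. \<Sum>K\<in>\<K>. c J * d K * prob (E J \<inter> F K))
      = (\<Sum>J\<in>\<J>. c J * (\<Sum>K\<in>\<K>. d K * prob (E J \<inter> F K)))"
    by (simp add: sum_distrib_left mult_ac)
  also have "\<dots> \<le> (\<Sum>J\<in>\<J>. c J * (prob (E J) * ((\<Sum>K\<in>\<K>. d K * prob (F K)) + phi_mix M X m * Z)))"
    by (intro sum_mono mult_left_mono weighted_sum_prob_inter_le[OF rv k E fin F disj d Z] c)
  also have "\<dots> = (\<Sum>J\<in>\<J>. c J * prob (E J)) * ((\<Sum>K\<in>\<K>. d K * prob (F K)) + phi_mix M X m * Z)"
    by (simp add: sum_distrib_right mult_ac)
  finally show ?thesis .
qed

end

section \<open>Exponential moments of sums of centred indicators\<close>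

locale centred_indicators = prob_space M for M :: "'a measure" +
  fixes X :: "nat \<Rightarrow> 'a \<Rightarrow> real" and B :: "real set" and q :: real
  assumes random_variables: "\<And>i. X i \<in> borel_measurable M" and borel_B: "B \<in> sets borel"
    and prob_vimage_B: "\<And>i. i \<ge> 1 \<Longrightarrow> prob (X i -` B \<inter> space M) = q"
begin

definition hit :: "nat \<Rightarrow> 'a set" where "hit i = X i -` B \<inter> space M"
definition Y :: "nat \<Rightarrow> 'a \<Rightarrow> real" where "Y i \<omega> = indicator (hit i) \<omega> - q"
definition S :: "nat set \<Rightarrow> 'a \<Rightarrow> real" where "S I \<omega> = (\<Sum>i\<in>I. Y i \<omega>)"
definition mgf :: "real \<Rightarrow> nat set \<Rightarrow> real" where "mgf u I = (\<integral>\<omega>. exp (u * S I \<omega>) \<partial>M)"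

definition hits :: "nat set \<Rightarrow> 'a \<Rightarrow> nat set" where "hits I \<omega> = {i\<in>I. \<omega> \<in> hit i}"
definition atom :: "nat set \<Rightarrow> nat set \<Rightarrow> 'a set" where "atom I J = {\<omega>\<in>space M. hits I \<omega> = J}"

lemma sets_hit [measurable]: "hit i \<in> sets M"
  unfolding hit_def using measurable_sets[OF random_variables borel_B] .

lemma hit_subset_space: "hit i \<subseteq> space M"
  by (auto simp: hit_def)

lemma hit_in_gen_sigma: "i \<in> I \<Longrightarrow> hit i \<in> gen_sigma M X I"
  unfolding hit_def by (rule vimage_in_gen_sigma[OF _ borel_B])

lemma prob_hit: "i \<ge> 1 \<Longrightarrow> prob (hit i) = q"
  unfolding hit_def by (rule prob_vimage_B)

lemma q_nonneg: "0 \<le> q" and q_le_1: "q \<le> 1"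
  using prob_hit[of 1] by auto

lemma abs_Y_le_1: "\<bar>Y i \<omega>\<bar> \<le> 1"
  using q_nonneg q_le_1 by (auto simp: Y_def indicator_def)

lemma measurable_Y [measurable]: "Y i \<in> borel_measurable M"
  unfolding Y_def by measurable

lemma measurable_S [measurable]: "S I \<in> borel_measurable M"
  unfolding S_def by measurable

lemma abs_S_le_card: "\<bar>S I \<omega>\<bar> \<le> real (card I)"
proof -
  have "\<bar>S I \<omega>\<bar> \<le> (\<Sum>i\<in>I. \<bar>Y i \<omega>\<bar>)" unfolding S_def by (rule sum_abs)
  also have "\<dots> \<le> (\<Sum>i\<in>I. 1)" by (intro sum_mono abs_Y_le_1)
  finally show ?thesis by simp
qed

lemma S_eq_card_hits:
  assumes "finite I"
  shows "S I \<omega> = real (card (hits I \<omega>)) - real (card I) * q"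
proof -
  have "(\<Sum>i\<in>I. indicator (hit i) \<omega> :: real) = (\<Sum>i\<in>hits I \<omega>. 1)"
    unfolding hits_def using assms by (simp add: sum.inter_filter[symmetric] indicator_def Int_def)
  then show ?thesis by (simp add: S_def Y_def sum_subtractf)
qed

lemma atom_in_gen_sigma:
  assumes "finite I"
  shows "atom I J \<in> gen_sigma M X I"
proof -
  interpret past: sigma_algebra "space M" "gen_sigma M X I" by (rule sigma_algebra_gen_sigma)
  show ?thesis
  proof (cases "J \<subseteq> I \<and> I \<noteq> {}")
    case True
    have "atom I J = space M \<inter> (\<Inter>i\<in>I. if i \<in> J then hit i else space M - hit i)"
      using True by (auto simp: atom_def hits_def split: if_splits)
    moreover have "(\<Inter>i\<in>I. if i \<in> J then hit i else space M - hit i) \<in> gen_sigma M X I"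
      using True by (intro past.finite_INT assms) (auto intro: hit_in_gen_sigma)
    ultimately show ?thesis by auto
  next
    case False
    then have "atom I J = {} \<or> atom I J = space M" by (auto simp: atom_def hits_def)
    then show ?thesis using past.empty_sets space_in_gen_sigma by metis
  qed
qed

lemma sets_atom [measurable]: "finite I \<Longrightarrow> atom I J \<in> sets M"
  using atom_in_gen_sigma gen_sigma_subset_sets[of X, OF random_variables] by blast

lemma atom_subset_space: "atom I J \<subseteq> space M"
  by (auto simp: atom_def)

lemma disjoint_family_atom: "disjoint_family_on (atom I) \<J>"
  by (auto simp: disjoint_family_on_def atom_def)

lemma integrable_indicator_atom [simp]: "finite I \<Longrightarrow> integrable M (indicat_real (atom I J))"
  by (intro integrable_real_indicator) (auto simp: less_top[symmetric])

lemma fun_hits_eq_sum_atoms: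
  fixes g :: "nat set \<Rightarrow> real"
  assumes "finite I" "\<omega> \<in> space M"
  shows "g (hits I \<omega>) = (\<Sum>J\<in>Pow I. g J * indicator (atom I J) \<omega>)"
proof -
  have "(\<Sum>J\<in>Pow I. g J * indicator (atom I J) \<omega>) = (\<Sum>J\<in>{hits I \<omega>}. g J * indicator (atom I J) \<omega>)"
  proof (rule sum.mono_neutral_right)
    show "\<forall>J\<in>Pow I - {hits I \<omega>}. g J * indicator (atom I J) \<omega> = 0"
      by (auto simp: atom_def indicator_def)
  qed (use assms in \<open>auto simp: hits_def\<close>)
  then show ?thesis using assms by (simp add: atom_def)
qed

lemma integral_fun_hits:
  fixes g :: "nat set \<Rightarrow> real"
  assumes "finite I"
  shows "(\<integral>\<omega>. g (hits I \<omega>) \<partial>M) = (\<Sum>J\<in>Pow I. g J * prob (atom I J))"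
proof -
  have "(\<integral>\<omega>. g (hits I \<omega>) \<partial>M) = (\<integral>\<omega>. (\<Sum>J\<in>Pow I. g J * indicator (atom I J) \<omega>) \<partial>M)"
    by (intro Bochner_Integration.integral_cong refl fun_hits_eq_sum_atoms assms)
  also have "\<dots> = (\<Sum>J\<in>Pow I. (\<integral>\<omega>. g J * indicator (atom I J) \<omega> \<partial>M))"
    by (rule Bochner_Integration.integral_sum) (simp add: assms)
  also have "\<dots> = (\<Sum>J\<in>Pow I. g J * prob (atom I J))"
    using assms by (simp add: Int_absorb2[OF atom_subset_space])
  finally show ?thesis .
qed

lemma integral_fun_hits_mult:
  fixes g h :: "nat set \<Rightarrow> real"
  assumes "finite I" "finite I'"
  shows "(\<integral>\<omega>. g (hits I \<omega>) * h (hits I' \<omega>) \<partial>M)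
     = (\<Sum>J\<in>Pow I. \<Sum>K\<in>Pow I'. g J * h K * prob (atom I J \<inter> atom I' K))"
proof -
  have "g (hits I \<omega>) * h (hits I' \<omega>)
      = (\<Sum>J\<in>Pow I. \<Sum>K\<in>Pow I'. g J * h K * indicator (atom I J \<inter> atom I' K) \<omega>)"
    if "\<omega> \<in> space M" for \<omega>
    unfolding fun_hits_eq_sum_atoms[OF assms(1) that, of g] fun_hits_eq_sum_atoms[OF assms(2) that, of h]
    by (simp add: sum_distrib_left sum_distrib_right indicator_inter_arith mult_ac) (rule sum.swap)
  then have "(\<integral>\<omega>. g (hits I \<omega>) * h (hits I' \<omega>) \<partial>M)
      = (\<integral>\<omega>. (\<Sum>J\<in>Pow I. \<Sum>K\<in>Pow I'. g J * h K * indicator (atom I J \<inter> atom I' K) \<omega>) \<partial>M)"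
    by (intro Bochner_Integration.integral_cong) auto
  also have "\<dots> = (\<Sum>J\<in>Pow I. (\<integral>\<omega>. (\<Sum>K\<in>Pow I'. g J * h K * indicator (atom I J \<inter> atom I' K) \<omega>) \<partial>M))"
    using assms by (intro Bochner_Integration.integral_sum Bochner_Integration.integrable_sum
        integrable_mult_right integrable_real_indicator) (auto simp: less_top[symmetric])
  also have "\<dots> = (\<Sum>J\<in>Pow I. \<Sum>K\<in>Pow I'. (\<integral>\<omega>. g J * h K * indicator (atom I J \<inter> atom I' K) \<omega> \<partial>M))"
    using assms by (intro sum.cong refl Bochner_Integration.integral_sum integrable_mult_right
        integrable_real_indicator) (auto simp: less_top[symmetric])
  also have "\<dots> = (\<Sum>J\<in>Pow I. \<Sum>K\<in>Pow I'. g J * h K * prob (atom I J \<inter> atom I' K))"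
    using assms by (simp add: Int_absorb2 atom_subset_space le_infI1)
  finally show ?thesis .
qed

lemma mult_S_le: "u * S I \<omega> \<le> \<bar>u\<bar> * card I"
proof -
  have "u * S I \<omega> \<le> \<bar>u\<bar> * \<bar>S I \<omega>\<bar>" by (metis abs_ge_self abs_mult)
  also have "\<dots> \<le> \<bar>u\<bar> * card I" by (intro mult_left_mono abs_S_le_card) auto
  finally show ?thesis .
qed

lemma integrable_exp_S [simp]: "integrable M (\<lambda>\<omega>. exp (u * S I \<omega>))"
  by (rule integrable_const_bound[where B="exp (\<bar>u\<bar> * card I)"]) (auto simp: mult_S_le)

lemma mgf_nonneg: "0 \<le> mgf u I"
  unfolding mgf_def by (rule integral_nonneg_AE) simp

lemma mgf_empty [simp]: "mgf u {} = 1"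
  by (simp add: mgf_def S_def prob_space)

text \<open>Both exponentials are functions of the hit patterns, i.e.\ weighted sums of indicators of atoms,
  so the mixing inequality can be applied atom by atom.\<close>

lemma mgf_union_le:
  assumes k: "k \<ge> 1" and fin: "finite I" "finite I'" and I: "I \<subseteq> {1..k}" and I': "I' \<subseteq> {k+m..}"
    and m: "m \<ge> 1"
  shows "mgf u (I \<union> I') \<le> mgf u I * (mgf u I' + phi_mix M X m * exp (\<bar>u\<bar> * card I'))"
proof -
  define G where "G L J = exp (u * (real (card J) - real (card L) * q))" for L J :: "nat set"
  have exp_S: "exp (u * S L \<omega>) = G L (hits L \<omega>)" if "finite L" for L \<omega>
    using S_eq_card_hits[OF that] by (simp add: G_def)
  have "I \<inter> I' = {}" using I I' m by fastforce
  then have "S (I \<union> I') \<omega> = S I \<omega> + S I' \<omega>" for \<omega>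
    unfolding S_def using fin by (simp add: sum.union_disjoint)
  then have "exp (u * S (I \<union> I') \<omega>) = G I (hits I \<omega>) * G I' (hits I' \<omega>)" for \<omega>
    using exp_S fin by (simp add: distrib_left exp_add)
  then have "mgf u (I \<union> I') = (\<Sum>J\<in>Pow I. \<Sum>K\<in>Pow I'. G I J * G I' K * prob (atom I J \<inter> atom I' K))"
    unfolding mgf_def by (simp only: integral_fun_hits_mult[OF fin])
  also have "\<dots> \<le> (\<Sum>J\<in>Pow I. G I J * prob (atom I J))
      * ((\<Sum>K\<in>Pow I'. G I' K * prob (atom I' K)) + phi_mix M X m * exp (\<bar>u\<bar> * card I'))"
  proof (rule double_weighted_sum_prob_inter_le[OF random_variables k])
    show "atom I J \<in> gen_sigma M X {1..k}" for J using atom_in_gen_sigma[OF fin(1)] gen_sigma_mono[OF I] by blast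
    show "atom I' K \<in> gen_sigma M X {k+m..}" for K using atom_in_gen_sigma[OF fin(2)] gen_sigma_mono[OF I'] by blast
    show "0 \<le> G I' K \<and> G I' K \<le> exp (\<bar>u\<bar> * real (card I'))" if "K \<in> Pow I'" for K
    proof -
      have "real (card K) \<le> real (card I')" using that fin(2) by (auto intro: card_mono)
      moreover have "0 \<le> real (card I') * q" "real (card I') * q \<le> real (card I')"
        using q_nonneg q_le_1 mult_left_mono[of q 1 "real (card I')"] by auto
      ultimately have "\<bar>real (card K) - real (card I') * q\<bar> \<le> real (card I')"
        unfolding abs_le_iff by linarith
      then have "\<bar>u\<bar> * \<bar>real (card K) - real (card I') * q\<bar> \<le> \<bar>u\<bar> * real (card I')"
        by (intro mult_left_mono) auto
      moreover have "u * (real (card K) - real (card I') * q) \<le> \<bar>u\<bar> * \<bar>real (card K) - real (card I') * q\<bar>"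
        by (metis abs_ge_self abs_mult)
      ultimately show ?thesis unfolding G_def by simp
    qed
  qed (auto simp: G_def fin disjoint_family_atom)
  also have "\<dots> = mgf u I * (mgf u I' + phi_mix M X m * exp (\<bar>u\<bar> * card I'))"
    using fin by (simp only: mgf_def exp_S integral_fun_hits)
  finally show ?thesis .
qed

lemma integrable_Y_mult_Y [simp]: "integrable M (\<lambda>\<omega>. Y i \<omega> * Y j \<omega>)"
  by (rule integrable_const_bound[where B=1]) (auto simp: abs_mult intro!: mult_le_one abs_Y_le_1)

lemma integrable_Y [simp]: "integrable M (Y i)"
  by (rule integrable_const_bound[where B=1]) (auto simp: abs_Y_le_1)

lemma integrable_S [simp]: "integrable M (S I)"
  unfolding S_def by simp

lemma integrable_S_sq [simp]: "integrable M (\<lambda>\<omega>. (S I \<omega>)\<^sup>2)"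
  by (rule integrable_const_bound[where B="real (card I)^2"])
     (auto simp: abs_le_square_iff[symmetric] abs_S_le_card intro!: power_mono)

lemma integral_Y: "i \<ge> 1 \<Longrightarrow> (\<integral>\<omega>. Y i \<omega> \<partial>M) = 0"
  unfolding Y_def using prob_hit
  by (simp add: prob_space Int_absorb2 hit_subset_space integrable_real_indicator less_top[symmetric])

lemma integral_S: "finite I \<Longrightarrow> I \<subseteq> {1..} \<Longrightarrow> (\<integral>\<omega>. S I \<omega> \<partial>M) = 0"
  unfolding S_def by (subst Bochner_Integration.integral_sum) (auto intro!: sum.neutral integral_Y)

lemma integral_Y_mult_Y:
  assumes "i \<ge> 1" "j \<ge> 1"
  shows "(\<integral>\<omega>. Y i \<omega> * Y j \<omega> \<partial>M) = prob (hit i \<inter> hit j) - q\<^sup>2"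
proof -
  have "(\<integral>\<omega>. Y i \<omega> * Y j \<omega> \<partial>M)
      = (\<integral>\<omega>. indicator (hit i \<inter> hit j) \<omega> - q * indicator (hit i) \<omega> - q * indicator (hit j) \<omega> + q\<^sup>2 \<partial>M)"
    by (rule Bochner_Integration.integral_cong) (auto simp: Y_def indicator_def power2_eq_square algebra_simps)
  also have "\<dots> = prob (hit i \<inter> hit j) - q * prob (hit i) - q * prob (hit j) + q\<^sup>2"
    by (simp add: prob_space Int_absorb2 hit_subset_space le_infI1 integrable_real_indicator
        less_top[symmetric])
  finally show ?thesis using prob_hit assms by (simp add: power2_eq_square)
qed

lemma integral_Y_mult_Y_le_phi_mix:
  assumes "1 \<le> i" "i < j"
  shows "(\<integral>\<omega>. Y i \<omega> * Y j \<omega> \<partial>M) \<le> q * phi_mix M X (j - i)"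
proof -
  have "prob (hit i \<inter> hit j) \<le> prob (hit i) * (prob (hit j) + phi_mix M X (j - i))"
    using assms by (intro prob_inter_le_phi_mix[OF random_variables assms(1)] hit_in_gen_sigma) auto
  then show ?thesis using integral_Y_mult_Y[of i j] prob_hit assms by (simp add: power2_eq_square algebra_simps)
qed

lemma integral_Y_sq_le: "1 \<le> i \<Longrightarrow> (\<integral>\<omega>. Y i \<omega> * Y i \<omega> \<partial>M) \<le> q"
  using integral_Y_mult_Y[of i i] prob_hit[of i] q_nonneg q_le_1 by (simp add: power2_eq_square mult_le_one)

lemma sum_integral_Y_mult_Y_after_le:
  assumes Phi: "\<And>D. (\<Sum>d=1..D. phi_mix M X d) \<le> \<Phi>" and I: "finite I" "I \<subseteq> {1..}" and i: "i \<in> I"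
  shows "(\<Sum>j\<in>{j\<in>I. i < j}. \<integral>\<omega>. Y i \<omega> * Y j \<omega> \<partial>M) \<le> q * \<Phi>"
proof -
  have "(\<Sum>j\<in>{j\<in>I. i < j}. \<integral>\<omega>. Y i \<omega> * Y j \<omega> \<partial>M) \<le> (\<Sum>j\<in>{j\<in>I. i < j}. q * phi_mix M X (j - i))"
    using I i by (intro sum_mono integral_Y_mult_Y_le_phi_mix) auto
  also have "\<dots> = q * (\<Sum>d\<in>(\<lambda>j. j - i) ` {j\<in>I. i < j}. phi_mix M X d)"
    by (subst sum.reindex) (auto simp: inj_on_def sum_distrib_left)
  also have "\<dots> \<le> q * \<Phi>"
    using I by (intro mult_left_mono q_nonneg sum_phi_mix_le[OF random_variables Phi, where N="Max I"])
      (auto intro: le_trans[OF diff_le_self Max_ge[OF I(1)]])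
  finally show ?thesis .
qed

lemma sum_integral_Y_mult_Y_before_le:
  assumes Phi: "\<And>D. (\<Sum>d=1..D. phi_mix M X d) \<le> \<Phi>" and I: "finite I" "I \<subseteq> {1..}" and i: "i \<in> I"
  shows "(\<Sum>j\<in>{j\<in>I. j < i}. \<integral>\<omega>. Y i \<omega> * Y j \<omega> \<partial>M) \<le> q * \<Phi>"
proof -
  have "(\<Sum>j\<in>{j\<in>I. j < i}. \<integral>\<omega>. Y i \<omega> * Y j \<omega> \<partial>M) \<le> (\<Sum>j\<in>{j\<in>I. j < i}. q * phi_mix M X (i - j))"
    using I integral_Y_mult_Y_le_phi_mix by (intro sum_mono) (auto simp: mult.commute)
  also have "\<dots> = q * (\<Sum>d\<in>(\<lambda>j. i - j) ` {j\<in>I. j < i}. phi_mix M X d)"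
    by (subst sum.reindex) (auto simp: inj_on_def sum_distrib_left)
  also have "\<dots> \<le> q * \<Phi>"
    using I by (intro mult_left_mono q_nonneg sum_phi_mix_le[OF random_variables Phi, where N=i]) auto
  finally show ?thesis .
qed

lemma integral_S_sq_le:
  assumes Phi: "\<And>D. (\<Sum>d=1..D. phi_mix M X d) \<le> \<Phi>" and I: "finite I" "I \<subseteq> {1..}"
  shows "(\<integral>\<omega>. (S I \<omega>)\<^sup>2 \<partial>M) \<le> real (card I) * q * (1 + 2 * \<Phi>)"
proof -
  have "(\<integral>\<omega>. (S I \<omega>)\<^sup>2 \<partial>M) = (\<Sum>i\<in>I. \<Sum>j\<in>I. \<integral>\<omega>. Y i \<omega> * Y j \<omega> \<partial>M)"
    by (simp add: S_def power2_eq_square sum_product Bochner_Integration.integrable_sum)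
  also have "\<dots> \<le> (\<Sum>i\<in>I. q * (1 + 2 * \<Phi>))"
  proof (rule sum_mono)
    fix i assume i: "i \<in> I"
    define after where "after = {j\<in>I. i < j}"
    define before where "before = {j\<in>I. j < i}"
    have split: "I = {i} \<union> after \<union> before" using i by (auto simp: after_def before_def)
    have "finite after" "finite before" "i \<notin> after" "i \<notin> before" "after \<inter> before = {}"
      using I(1) by (auto simp: after_def before_def)
    then have "(\<Sum>j\<in>I. \<integral>\<omega>. Y i \<omega> * Y j \<omega> \<partial>M) = (\<integral>\<omega>. Y i \<omega> * Y i \<omega> \<partial>M)
        + (\<Sum>j\<in>after. \<integral>\<omega>. Y i \<omega> * Y j \<omega> \<partial>M) + (\<Sum>j\<in>before. \<integral>\<omega>. Y i \<omega> * Y j \<omega> \<partial>M)"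
      by (subst split) (simp add: sum.union_disjoint)
    then show "(\<Sum>j\<in>I. \<integral>\<omega>. Y i \<omega> * Y j \<omega> \<partial>M) \<le> q * (1 + 2 * \<Phi>)"
      using integral_Y_sq_le[of i] sum_integral_Y_mult_Y_after_le[OF Phi I i]
        sum_integral_Y_mult_Y_before_le[OF Phi I i] i I
      unfolding after_def before_def by (auto simp: algebra_simps)
  qed
  finally show ?thesis by simp
qed

lemma mgf_le_1_plus_sq:
  fixes u :: real
  assumes Phi: "\<And>D. (\<Sum>d=1..D. phi_mix M X d) \<le> \<Phi>" and I: "finite I" "I \<subseteq> {1..}"
    and u: "\<bar>u\<bar> * card I \<le> 1"
  shows "mgf u I \<le> 1 + u\<^sup>2 * (real (card I) * q * (1 + 2 * \<Phi>))"
proof -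
  have "exp (u * S I \<omega>) \<le> 1 + u * S I \<omega> + u\<^sup>2 * (S I \<omega>)\<^sup>2" for \<omega>
  proof -
    have "\<bar>u * S I \<omega>\<bar> \<le> 1"
      using abs_S_le_card[of I \<omega>] u by (simp add: abs_mult) (meson abs_ge_zero mult_left_mono order_trans)
    from exp_le_1_plus_x_plus_sq[OF this] show ?thesis by (simp add: power_mult_distrib)
  qed
  then have "mgf u I \<le> (\<integral>\<omega>. 1 + u * S I \<omega> + u\<^sup>2 * (S I \<omega>)\<^sup>2 \<partial>M)"
    unfolding mgf_def by (intro integral_mono) auto
  also have "\<dots> = 1 + u\<^sup>2 * (\<integral>\<omega>. (S I \<omega>)\<^sup>2 \<partial>M)"
    using I by (simp add: prob_space integral_S)
  also have "\<dots> \<le> 1 + u\<^sup>2 * (real (card I) * q * (1 + 2 * \<Phi>))"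
    by (intro add_left_mono mult_left_mono integral_S_sq_le[OF Phi I]) auto
  finally show ?thesis .
qed

end

section \<open>Blocking and the tail bound\<close>

text \<open>Blocks are numbered from \<open>0\<close>: \<open>block n L b = {b * L + 1 .. b * L + L} \<inter> {1..n}\<close>.\<close>

definition block :: "nat \<Rightarrow> nat \<Rightarrow> nat \<Rightarrow> nat set" where
  "block n L b = {i\<in>{1..n}. (i - 1) div L = b}"

definition alternate_blocks :: "nat \<Rightarrow> nat \<Rightarrow> nat \<Rightarrow> nat \<Rightarrow> nat set" where
  "alternate_blocks n L par r = {i\<in>{1..n}. (i - 1) div L < r \<and> ((i - 1) div L) mod 2 = par}"

lemma finite_block [simp]: "finite (block n L b)"
  by (simp add: block_def)

lemma finite_alternate_blocks [simp]: "finite (alternate_blocks n L par r)"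
  by (simp add: alternate_blocks_def)

lemma alternate_blocks_0 [simp]: "alternate_blocks n L par 0 = {}"
  by (simp add: alternate_blocks_def)

lemma alternate_blocks_Suc:
  "alternate_blocks n L par (Suc r) =
     (if r mod 2 = par then alternate_blocks n L par r \<union> block n L r else alternate_blocks n L par r)"
  by (auto simp: alternate_blocks_def block_def less_Suc_eq)

lemma block_subset_pos: "block n L b \<subseteq> {1..}"
  by (auto simp: block_def)

lemma block_subset:
  assumes "L \<ge> 1"
  shows "block n L b \<subseteq> {b * L + 1 .. b * L + L}"
proof
  fix i assume i: "i \<in> block n L b"
  then have d: "(i - 1) div L = b" and "i \<ge> 1" by (auto simp: block_def)
  have "b * L \<le> i - 1" using d less_eq_div_iff_mult_less_eq[of L b "i - 1"] assms by simp
  moreover have "i - 1 < (b + 1) * L" using d div_less_iff_less_mult[of L "i - 1" "b + 1"] assms by simp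
  ultimately show "i \<in> {b * L + 1 .. b * L + L}" using \<open>i \<ge> 1\<close> by auto
qed

lemma card_block_le: "L \<ge> 1 \<Longrightarrow> card (block n L b) \<le> L"
  using card_mono[OF _ block_subset[of L n b]] by simp

text \<open>Consecutive blocks of equal parity are separated by a gap of \<open>L\<close> indices.\<close>

lemma alternate_blocks_subset:
  assumes L: "L \<ge> 1" and r: "r mod 2 = par"
  shows "alternate_blocks n L par r \<subseteq> {1..max 1 ((r - 1) * L)}"
proof
  fix i assume i: "i \<in> alternate_blocks n L par r"
  define b where "b = (i - 1) div L"
  have b: "b < r" "b mod 2 = r mod 2" and "i \<ge> 1" using i r by (auto simp: alternate_blocks_def b_def)
  have "b \<noteq> r - 1"
  proof
    assume "b = r - 1"
    then have "r = Suc b" using b by simp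
    then show False using b(2) by presburger
  qed
  then have "b < r - 1" using b by simp
  then have "i - 1 < (r - 1) * L" using L unfolding b_def by (simp add: div_less_iff_less_mult)
  then show "i \<in> {1..max 1 ((r - 1) * L)}" using \<open>i \<ge> 1\<close> by auto
qed

context centred_indicators
begin

lemma mgf_alternate_blocks_Suc_le:
  assumes L: "L \<ge> 1" and r: "r mod 2 = par"
  shows "mgf u (alternate_blocks n L par r \<union> block n L r)
    \<le> mgf u (alternate_blocks n L par r) * (mgf u (block n L r) + phi_mix M X L * exp (\<bar>u\<bar> * L))"
proof (cases "alternate_blocks n L par r = {}")
  case True
  then show ?thesis using phi_mix_nonneg[of X, OF random_variables] by simp
next
  case False
  then have r1: "r \<ge> 1" by (cases r) auto
  define k where "k = max 1 ((r - 1) * L)"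
  have "k + L \<le> r * L + 1"
  proof (cases "(r - 1) * L \<ge> 1")
    case True
    then show ?thesis using r1 by (cases r) (auto simp: k_def)
  next
    case False
    then have "r = 1" using L r1 by (cases r) auto
    then show ?thesis by (simp add: k_def)
  qed
  then have gap: "block n L r \<subseteq> {k + L..}" using block_subset[OF L, of n r] by auto
  have "mgf u (alternate_blocks n L par r \<union> block n L r)
      \<le> mgf u (alternate_blocks n L par r) * (mgf u (block n L r) + phi_mix M X L * exp (\<bar>u\<bar> * card (block n L r)))"
    using alternate_blocks_subset[OF L r, of n] L
    by (intro mgf_union_le[OF _ finite_alternate_blocks finite_block _ gap]) (auto simp: k_def)
  also have "\<dots> \<le> mgf u (alternate_blocks n L par r) * (mgf u (block n L r) + phi_mix M X L * exp (\<bar>u\<bar> * L))"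
    using card_block_le[OF L, of n r] phi_mix_nonneg[of X, OF random_variables]
    by (intro mult_left_mono add_left_mono mgf_nonneg) (auto intro!: mult_left_mono)
  finally show ?thesis .
qed

lemma mgf_alternate_blocks_le_prod:
  assumes L: "L \<ge> 1"
  shows "mgf u (alternate_blocks n L par r)
     \<le> (\<Prod>b\<in>{b. b < r \<and> b mod 2 = par}. mgf u (block n L b) + phi_mix M X L * exp (\<bar>u\<bar> * L))"
proof (induction r)
  case (Suc r)
  let ?f = "\<lambda>b. mgf u (block n L b) + phi_mix M X L * exp (\<bar>u\<bar> * L)"
  show ?case
  proof (cases "r mod 2 = par")
    case True
    have "0 \<le> ?f r" using phi_mix_nonneg[of X, OF random_variables] by (intro add_nonneg_nonneg mgf_nonneg) auto
    then have "mgf u (alternate_blocks n L par (Suc r)) \<le> (\<Prod>b\<in>{b. b < r \<and> b mod 2 = par}. ?f b) * ?f r"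
      using True mgf_alternate_blocks_Suc_le[OF L True] Suc.IH
      by (simp add: alternate_blocks_Suc) (meson mult_right_mono order_trans)
    also have "{b. b < Suc r \<and> b mod 2 = par} = insert r {b. b < r \<and> b mod 2 = par}"
      using True by auto
    ultimately show ?thesis by (simp add: mult.commute)
  next
    case False
    then have "{b. b < Suc r \<and> b mod 2 = par} = {b. b < r \<and> b mod 2 = par}" by (auto simp: less_Suc_eq)
    then show ?thesis using Suc False by (simp add: alternate_blocks_Suc)
  qed
qed simp

lemma mgf_block_plus_error_le_exp:
  fixes u :: real
  assumes Phi: "\<And>D. (\<Sum>d=1..D. phi_mix M X d) \<le> \<Phi>" and L: "L \<ge> 1" and u: "\<bar>u\<bar> * L \<le> 1"
  shows "mgf u (block n L b) + phi_mix M X L * exp (\<bar>u\<bar> * L)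
    \<le> exp (u\<^sup>2 * L * q * (1 + 2 * \<Phi>) + phi_mix M X L * exp 1)"
proof -
  have Phi0: "0 \<le> \<Phi>" using Phi[of 0] by simp
  have card: "card (block n L b) \<le> L" by (rule card_block_le[OF L])
  then have "\<bar>u\<bar> * card (block n L b) \<le> 1"
    using u by (meson abs_ge_zero mult_left_mono of_nat_mono order_trans)
  then have "mgf u (block n L b) \<le> 1 + u\<^sup>2 * (real (card (block n L b)) * q * (1 + 2 * \<Phi>))"
    by (rule mgf_le_1_plus_sq[OF Phi finite_block block_subset_pos])
  also have "\<dots> \<le> 1 + u\<^sup>2 * (real L * q * (1 + 2 * \<Phi>))"
    using card q_nonneg Phi0 by (intro add_left_mono mult_left_mono mult_right_mono) auto
  moreover have "phi_mix M X L * exp (\<bar>u\<bar> * L) \<le> phi_mix M X L * exp 1"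
    using u phi_mix_nonneg[of X, OF random_variables] by (intro mult_left_mono) auto
  ultimately have "mgf u (block n L b) + phi_mix M X L * exp (\<bar>u\<bar> * L)
      \<le> 1 + (u\<^sup>2 * L * q * (1 + 2 * \<Phi>) + phi_mix M X L * exp 1)"
    by (simp add: algebra_simps)
  also have "\<dots> \<le> exp (u\<^sup>2 * L * q * (1 + 2 * \<Phi>) + phi_mix M X L * exp 1)"
    by (rule exp_ge_add_one_self)
  finally show ?thesis .
qed

lemma mgf_alternate_blocks_le_exp:
  fixes u :: real
  assumes Phi: "\<And>D. (\<Sum>d=1..D. phi_mix M X d) \<le> \<Phi>" and L: "L \<ge> 1" and u: "\<bar>u\<bar> * L \<le> 1"
  shows "mgf u (alternate_blocks n L par r) \<le> exp (real r * (u\<^sup>2 * L * q * (1 + 2 * \<Phi>) + phi_mix M X L * exp 1))"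
proof -
  define x where "x = u\<^sup>2 * L * q * (1 + 2 * \<Phi>) + phi_mix M X L * exp 1"
  define T where "T = {b. b < r \<and> b mod 2 = par}"
  have "0 \<le> x" unfolding x_def using Phi[of 0] phi_mix_nonneg[of X, OF random_variables] q_nonneg
    by (intro add_nonneg_nonneg mult_nonneg_nonneg) auto
  have "card T \<le> r" using card_mono[of "{..<r}" T] by (auto simp: T_def)
  have "mgf u (alternate_blocks n L par r)
      \<le> (\<Prod>b\<in>T. mgf u (block n L b) + phi_mix M X L * exp (\<bar>u\<bar> * L))"
    unfolding T_def by (rule mgf_alternate_blocks_le_prod[OF L])
  also have "\<dots> \<le> (\<Prod>b\<in>T. exp x)"
    unfolding x_def using phi_mix_nonneg[of X, OF random_variables]
    by (intro prod_mono conjI add_nonneg_nonneg mgf_nonneg mult_nonneg_nonneg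
        mgf_block_plus_error_le_exp[OF Phi L u]) auto
  also have "\<dots> = exp x ^ card T" by simp
  also have "\<dots> \<le> exp x ^ r" using \<open>card T \<le> r\<close> \<open>0 \<le> x\<close> by (intro power_increasing) auto
  also have "\<dots> = exp (real r * x)" by (simp add: exp_of_nat_mult)
  finally show ?thesis unfolding x_def .
qed

lemma chernoff_bound:
  fixes t \<sigma> c :: real
  assumes t: "t > 0"
  shows "prob {\<omega>\<in>space M. c \<le> \<sigma> * S I \<omega>} \<le> exp (- t * c) * mgf (\<sigma> * t) I"
proof -
  let ?E = "{\<omega>\<in>space M. c \<le> \<sigma> * S I \<omega>}"
  have "indicator ?E \<omega> \<le> exp (- t * c) * exp (\<sigma> * t * S I \<omega>)" for \<omega>
  proof (cases "\<omega> \<in> ?E")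
    case True
    then have "0 \<le> t * (\<sigma> * S I \<omega> - c)" using t by simp
    then have "1 \<le> exp (- t * c + \<sigma> * t * S I \<omega>)" by (simp add: algebra_simps)
    then show ?thesis using True by (simp add: exp_add[symmetric])
  qed simp
  then have "(\<integral>\<omega>. indicator ?E \<omega> \<partial>M) \<le> (\<integral>\<omega>. exp (- t * c) * exp (\<sigma> * t * S I \<omega>) \<partial>M)"
    by (intro integral_mono integrable_real_indicator) (auto simp: less_top[symmetric])
  then show ?thesis by (simp add: mgf_def)
qed

lemma prob_abs_S_ge_le:
  fixes t c b :: real
  assumes t: "t > 0" and b: "mgf t I \<le> b" "mgf (- t) I \<le> b"
  shows "prob {\<omega>\<in>space M. c \<le> \<bar>S I \<omega>\<bar>} \<le> 2 * exp (- t * c) * b"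
proof -
  have "{\<omega>\<in>space M. c \<le> \<bar>S I \<omega>\<bar>} = {\<omega>\<in>space M. c \<le> 1 * S I \<omega>} \<union> {\<omega>\<in>space M. c \<le> -1 * S I \<omega>}"
    by auto
  then have "prob {\<omega>\<in>space M. c \<le> \<bar>S I \<omega>\<bar>}
      \<le> prob {\<omega>\<in>space M. c \<le> 1 * S I \<omega>} + prob {\<omega>\<in>space M. c \<le> -1 * S I \<omega>}"
    by (simp only:) (rule measure_Un_le; measurable)
  also have "\<dots> \<le> exp (- t * c) * mgf t I + exp (- t * c) * mgf (- t) I"
    using chernoff_bound[OF t, of c 1 I] chernoff_bound[OF t, of c "-1" I] by simp
  also have "\<dots> \<le> exp (- t * c) * b + exp (- t * c) * b"
    using b by (intro add_mono mult_left_mono) auto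
  finally show ?thesis by (simp add: mult_ac)
qed

lemma S_eq_alternate_blocks:
  assumes L: "L \<ge> 1"
  shows "S {1..n} \<omega> = S (alternate_blocks n L 0 (n div L + 1)) \<omega> + S (alternate_blocks n L 1 (n div L + 1)) \<omega>"
proof -
  have "(i - 1) div L < n div L + 1" if "i \<in> {1..n}" for i
  proof -
    have "i - 1 \<le> n" using that by auto
    then show ?thesis using div_le_mono[of "i - 1" n L] by simp
  qed
  then have "{1..n} = alternate_blocks n L 0 (n div L + 1) \<union> alternate_blocks n L 1 (n div L + 1)"
    by (auto simp: alternate_blocks_def)
  moreover have "alternate_blocks n L 0 (n div L + 1) \<inter> alternate_blocks n L 1 (n div L + 1) = {}"
    by (auto simp: alternate_blocks_def)
  ultimately show ?thesis unfolding S_def by (simp add: sum.union_disjoint)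
qed

lemma prob_abs_S_ge_le_blocks:
  fixes t c :: real
  assumes Phi: "\<And>D. (\<Sum>d=1..D. phi_mix M X d) \<le> \<Phi>" and L: "L \<ge> 1" and t: "t > 0" "t * L \<le> 1"
  shows "prob {\<omega>\<in>space M. 2 * c \<le> \<bar>S {1..n} \<omega>\<bar>}
     \<le> 4 * exp (- t * c + real (n div L + 1) * (t\<^sup>2 * L * q * (1 + 2 * \<Phi>) + phi_mix M X L * exp 1))"
proof -
  define R where "R = n div L + 1"
  define b where "b = exp (real R * (t\<^sup>2 * L * q * (1 + 2 * \<Phi>) + phi_mix M X L * exp 1))"
  have part: "prob {\<omega>\<in>space M. c \<le> \<bar>S (alternate_blocks n L par R) \<omega>\<bar>} \<le> 2 * exp (- t * c) * b" for par
    using t mgf_alternate_blocks_le_exp[OF Phi L, of t n par R] mgf_alternate_blocks_le_exp[OF Phi L, of "- t" n par R]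
    by (intro prob_abs_S_ge_le) (auto simp: b_def)
  have "{\<omega>\<in>space M. 2 * c \<le> \<bar>S {1..n} \<omega>\<bar>}
      \<subseteq> {\<omega>\<in>space M. c \<le> \<bar>S (alternate_blocks n L 0 R) \<omega>\<bar>} \<union> {\<omega>\<in>space M. c \<le> \<bar>S (alternate_blocks n L 1 R) \<omega>\<bar>}"
    using S_eq_alternate_blocks[OF L, of n] by (auto simp: R_def)
  then have "prob {\<omega>\<in>space M. 2 * c \<le> \<bar>S {1..n} \<omega>\<bar>}
      \<le> prob {\<omega>\<in>space M. c \<le> \<bar>S (alternate_blocks n L 0 R) \<omega>\<bar>} + prob {\<omega>\<in>space M. c \<le> \<bar>S (alternate_blocks n L 1 R) \<omega>\<bar>}"
    by (intro order_trans[OF finite_measure_mono measure_Un_le]) (measurable; fail)+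
  also have "\<dots> \<le> 4 * exp (- t * c) * b" using part[of 0] part[of 1] by simp
  also have "\<dots> = 4 * exp (- t * c + real R * (t\<^sup>2 * L * q * (1 + 2 * \<Phi>) + phi_mix M X L * exp 1))"
    by (simp only: b_def mult.assoc exp_add[symmetric])
  finally show ?thesis by (simp add: R_def)
qed

end

text \<open>For blocks of length \<open>L = \<lfloor>n\<^sup>1\<^sup>/\<^sup>4\<rfloor>\<close> the \<open>n / L\<close> mixing errors \<open>\<phi>(L) = O(L\<^sup>-\<^sup>3)\<close>
  add up to \<open>O(n / L\<^sup>4) = O(1)\<close>.\<close>

lemma block_length_bounds:
  fixes r :: real
  assumes n: "n \<ge> 1" and r: "r \<ge> 0" "r ^ 4 = real n"
  shows "1 \<le> nat \<lfloor>r\<rfloor>" "real (nat \<lfloor>r\<rfloor>) \<le> r"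
    and "real (n div nat \<lfloor>r\<rfloor> + 1) \<le> 2 * real n / real (nat \<lfloor>r\<rfloor>)"
    and "real n \<le> 16 * real (nat \<lfloor>r\<rfloor>) ^ 4"
proof -
  define L where "L = nat \<lfloor>r\<rfloor>"
  have r1: "r \<ge> 1"
  proof (rule ccontr)
    assume "\<not> r \<ge> 1"
    then have "r ^ 4 < 1 ^ 4" using r(1) by (intro power_strict_mono) auto
    then show False using r n by simp
  qed
  then have L1: "1 \<le> L" by (simp add: L_def le_nat_iff)
  then show "1 \<le> nat \<lfloor>r\<rfloor>" by (simp add: L_def)
  have Lr: "real L \<le> r" "r < real L + 1" using r1 by (auto simp: L_def)
  then show "real (nat \<lfloor>r\<rfloor>) \<le> r" by (simp add: L_def)
  have "r ^ 1 \<le> r ^ 4" using r1 by (intro power_increasing) auto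
  then have "L \<le> n" using Lr r by simp
  have "real (n div L) \<le> real n / real L" by (rule of_nat_div_le_of_nat)
  moreover have "1 \<le> real n / real L"
  proof -
    have "0 < real L" "real L \<le> real n" using L1 \<open>L \<le> n\<close> by simp_all
    then show ?thesis by simp
  qed
  ultimately show "real (n div nat \<lfloor>r\<rfloor> + 1) \<le> 2 * real n / real (nat \<lfloor>r\<rfloor>)" by (simp add: L_def)
  have "r \<le> 2 * real L" using Lr L1 by linarith
  then have "r ^ 4 \<le> (2 * real L) ^ 4" using r(1) by (intro power_mono) auto
  then have "real n \<le> (2 * real L) ^ 4" using r(2) by simp
  then show "real n \<le> 16 * real (nat \<lfloor>r\<rfloor>) ^ 4" by (simp add: L_def power_mult_distrib)
qed

lemma block_mixing_error_le:
  fixes \<phi> Cp :: real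
  assumes L: "L \<ge> 1" and R: "R \<le> 2 * real n / real L" and nL: "real n \<le> 16 * real L ^ 4"
    and \<phi>: "0 \<le> \<phi>" "\<phi> \<le> Cp / real L ^ 3"
  shows "R * (\<phi> * exp 1) \<le> 32 * exp 1 * Cp"
proof -
  have "0 \<le> Cp / real L ^ 3" using \<phi> by linarith
  then have "0 \<le> Cp" using L by (simp add: zero_le_divide_iff)
  have "R * (\<phi> * exp 1) \<le> (2 * real n / real L) * (Cp / real L ^ 3 * exp 1)"
    using R \<phi> by (intro mult_mono) auto
  also have "\<dots> = 2 * exp 1 * Cp * (real n / real L ^ 4)"
  proof -
    have "\<And>y a c e. (y::real) > 0 \<Longrightarrow> (2 * a / y) * (c / y ^ 3 * e) = 2 * e * c * (a / y ^ 4)"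
      by (simp add: field_simps eval_nat_numeral)
    then show ?thesis using L by simp
  qed
  also have "\<dots> \<le> 2 * exp 1 * Cp * 16"
    using nL L \<open>0 \<le> Cp\<close> by (intro mult_left_mono) (auto simp: pos_divide_le_eq)
  finally show ?thesis by simp
qed

context prob_space
begin

lemma indicator_sum_tail_bound:
  fixes X :: "nat \<Rightarrow> 'a \<Rightarrow> real" and t c r qb Cp \<Phi> :: real
  assumes rv: "\<And>i. X i \<in> borel_measurable M" and B: "B \<in> sets borel"
    and q: "\<And>i. i \<ge> 1 \<Longrightarrow> prob (X i -` B \<inter> space M) = q" "q \<le> qb"
    and Phi: "\<And>D. (\<Sum>d=1..D. phi_mix M X d) \<le> \<Phi>"
    and Cp: "\<And>m. m \<ge> 1 \<Longrightarrow> phi_mix M X m \<le> Cp / real m ^ 3"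
    and n: "n \<ge> 1" and r: "r \<ge> 0" "r ^ 4 = real n" and t: "t > 0" "t * r \<le> 1"
  shows "prob {\<omega>\<in>space M. 2 * c \<le> \<bar>\<Sum>i\<in>{1..n}. indicator (X i -` B \<inter> space M) \<omega> - q\<bar>}
     \<le> 4 * exp (- t * c + 2 * real n * t\<^sup>2 * qb * (1 + 2 * \<Phi>) + 32 * exp 1 * Cp)"
proof -
  interpret centred_indicators M X B q using rv B q by unfold_locales auto
  define L where "L = nat \<lfloor>r\<rfloor>"
  note L = block_length_bounds[OF n r, folded L_def]
  have Phi0: "0 \<le> \<Phi>" using Phi[of 0] by simp
  have "t * L \<le> 1" using t L(2) by (meson less_imp_le mult_left_mono order_trans)
  then have "prob {\<omega>\<in>space M. 2 * c \<le> \<bar>S {1..n} \<omega>\<bar>}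
     \<le> 4 * exp (- t * c + real (n div L + 1) * (t\<^sup>2 * L * q * (1 + 2 * \<Phi>) + phi_mix M X L * exp 1))"
    by (rule prob_abs_S_ge_le_blocks[OF Phi L(1) t(1)])
  also have "\<dots> \<le> 4 * exp (- t * c + 2 * real n * t\<^sup>2 * qb * (1 + 2 * \<Phi>) + 32 * exp 1 * Cp)"
  proof -
    have "real (n div L + 1) * (t\<^sup>2 * L * q * (1 + 2 * \<Phi>)) \<le> (2 * real n / real L) * (t\<^sup>2 * L * q * (1 + 2 * \<Phi>))"
      using L(3) q_nonneg Phi0 by (intro mult_right_mono) auto
    also have "\<dots> = 2 * real n * t\<^sup>2 * q * (1 + 2 * \<Phi>)" using L(1) by simp
    also have "\<dots> \<le> 2 * real n * t\<^sup>2 * qb * (1 + 2 * \<Phi>)"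
      using q(2) Phi0 by (intro mult_right_mono mult_left_mono) auto
    finally have "real (n div L + 1) * (t\<^sup>2 * L * q * (1 + 2 * \<Phi>)) \<le> 2 * real n * t\<^sup>2 * qb * (1 + 2 * \<Phi>)" .
    moreover have "real (n div L + 1) * (phi_mix M X L * exp 1) \<le> 32 * exp 1 * Cp"
      using L Cp[of L] phi_mix_nonneg[of X, OF rv] by (intro block_mixing_error_le) auto
    ultimately have "- t * c + real (n div L + 1) * (t\<^sup>2 * L * q * (1 + 2 * \<Phi>) + phi_mix M X L * exp 1)
        \<le> - t * c + 2 * real n * t\<^sup>2 * qb * (1 + 2 * \<Phi>) + 32 * exp 1 * Cp"
      unfolding distrib_left by linarith
    then show ?thesis by simp
  qed
  finally show ?thesis by (simp add: S_def Y_def hit_def)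
qed

end

section \<open>Quantiles and empirical distribution functions\<close>

lemma quantile_eq_of_atLeast: "{x. p \<le> G x} = {z..} \<Longrightarrow> quantile G p = z"
  by (simp add: quantile_def)

lemma quantile_between:
  assumes mono: "\<And>x y. x \<le> y \<Longrightarrow> G x \<le> G y" and "G l < p" "p \<le> G u"
  shows "l \<le> quantile G p" "quantile G p \<le> u"
proof -
  have below: "l < s" if "p \<le> G s" for s
    using mono[of s l] that \<open>G l < p\<close> by (cases "l < s") auto
  then have "bdd_below {x. p \<le> G x}" by (auto intro!: bdd_belowI[of _ l] less_imp_le)
  then show "quantile G p \<le> u" unfolding quantile_def using \<open>p \<le> G u\<close> by (intro cInf_lower) auto
  show "l \<le> quantile G p" unfolding quantile_def using \<open>p \<le> G u\<close> below
    by (intro cInf_greatest) (auto intro: less_imp_le)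
qed

lemma cdf_quantile_eq:
  fixes G :: "real \<Rightarrow> real"
  assumes mono: "\<And>x y. x \<le> y \<Longrightarrow> G x \<le> G y"
    and bot: "(G \<longlongrightarrow> 0) at_bot" and top: "(G \<longlongrightarrow> 1) at_top" and p: "0 < p" "p < 1"
    and cont: "isCont G (quantile G p)"
  shows "G (quantile G p) = p"
proof -
  let ?q = "quantile G p"
  obtain l where l: "\<And>x. x \<le> l \<Longrightarrow> G x < p"
    using order_tendstoD(2)[OF bot p(1)] by (auto simp: eventually_at_bot_linorder)
  obtain u where u: "\<And>x. x \<ge> u \<Longrightarrow> G x > p"
    using order_tendstoD(1)[OF top p(2)] by (auto simp: eventually_at_top_linorder)
  have "G x \<le> p" if "x < ?q" for x
  proof (rule ccontr)
    assume "\<not> G x \<le> p"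
    then have "?q \<le> x" using quantile_between(2)[OF mono, where l=l and p=p and u=x] l[of l] by simp
    with that show False by simp
  qed
  then have "eventually (\<lambda>x. G x \<le> p) (at_left ?q)"
    by (auto simp: eventually_at_filter)
  moreover have "(G \<longlongrightarrow> G ?q) (at_left ?q)" using cont by (simp add: isCont_def filterlim_at_split)
  ultimately have "G ?q \<le> p" by (intro tendsto_upperbound) auto
  have "p \<le> G x" if "?q < x" for x
  proof (rule ccontr)
    assume "\<not> p \<le> G x"
    then have "x \<le> ?q" using quantile_between(1)[OF mono, where l=x and p=p and u=u] u[of u] by simp
    with that show False by simp
  qed
  then have "eventually (\<lambda>x. p \<le> G x) (at_right ?q)"
    by (intro eventually_mono[OF eventually_at_right_less])
  moreover have "(G \<longlongrightarrow> G ?q) (at_right ?q)" using cont by (simp add: isCont_def filterlim_at_split)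
  ultimately have "p \<le> G ?q" by (intro tendsto_lowerbound) auto
  with \<open>G ?q \<le> p\<close> show ?thesis by simp
qed

lemma emp_df_eq_card: "emp_df X n \<omega> x = real (card {i\<in>{1..n}. X i \<omega> \<le> x}) / real n"
proof -
  have "(\<Sum>i=1..n. if X i \<omega> \<le> x then 1 else 0 :: real) = (\<Sum>i\<in>{i\<in>{1..n}. X i \<omega> \<le> x}. 1)"
    by (rule sum.inter_filter[symmetric]) simp
  then show ?thesis by (simp add: emp_df_def)
qed

lemma emp_df_mono: "x \<le> y \<Longrightarrow> emp_df X n \<omega> x \<le> emp_df X n \<omega> y"
  unfolding emp_df_def by (intro mult_left_mono sum_mono) auto

lemma emp_df_cong:
  "(\<And>i. i \<in> {1..n} \<Longrightarrow> X i \<omega> \<le> x \<longleftrightarrow> X i \<omega> \<le> y) \<Longrightarrow> emp_df X n \<omega> x = emp_df X n \<omega> y"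
  unfolding emp_df_def by (auto intro!: sum.cong)

lemma emp_df_below_sample:
  assumes "\<And>i. i \<in> {1..n} \<Longrightarrow> x < X i \<omega>"
  shows "emp_df X n \<omega> x = 0"
proof -
  have "{i\<in>{1..n}. X i \<omega> \<le> x} = {}" using assms not_le by fastforce
  then show ?thesis by (simp add: emp_df_eq_card)
qed

lemma emp_df_at_max_sample:
  assumes "n \<ge> 1" "\<And>i. i \<in> {1..n} \<Longrightarrow> X i \<omega> \<le> x"
  shows "emp_df X n \<omega> x = 1"
proof -
  have "{i\<in>{1..n}. X i \<omega> \<le> x} = {1..n}" using assms(2) by auto
  then show ?thesis using assms(1) by (simp add: emp_df_eq_card)
qed

lemma exists_max_sample:
  fixes X :: "nat \<Rightarrow> 'a \<Rightarrow> real"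
  assumes "finite I" "I \<noteq> {}"
  obtains j where "j \<in> I" "\<And>i. i \<in> I \<Longrightarrow> X i \<omega> \<le> X j \<omega>"
proof -
  have "Max ((\<lambda>i. X i \<omega>) ` I) \<in> (\<lambda>i. X i \<omega>) ` I" using assms by (intro Max_in) auto
  then obtain j where "j \<in> I" "X j \<omega> = Max ((\<lambda>i. X i \<omega>) ` I)" by (metis imageE)
  with assms show thesis by (intro that) auto
qed

lemma exists_min_sample:
  fixes X :: "nat \<Rightarrow> 'a \<Rightarrow> real"
  assumes "finite I" "I \<noteq> {}"
  obtains j where "j \<in> I" "\<And>i. i \<in> I \<Longrightarrow> X j \<omega> \<le> X i \<omega>"
proof -
  have "Min ((\<lambda>i. X i \<omega>) ` I) \<in> (\<lambda>i. X i \<omega>) ` I" using assms by (intro Min_in) auto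
  then obtain j where "j \<in> I" "X j \<omega> = Min ((\<lambda>i. X i \<omega>) ` I)" by (metis imageE)
  with assms show thesis by (intro that) auto
qed

lemma exists_sample_same_emp_df:
  assumes "i \<in> {1..n}" "X i \<omega> \<le> x"
  obtains j where "j \<in> {1..n}" "X j \<omega> \<le> x" "emp_df X n \<omega> (X j \<omega>) = emp_df X n \<omega> x"
proof -
  obtain j where j: "j \<in> {i\<in>{1..n}. X i \<omega> \<le> x}" "\<And>k. k \<in> {i\<in>{1..n}. X i \<omega> \<le> x} \<Longrightarrow> X k \<omega> \<le> X j \<omega>"
    using exists_max_sample[of "{i\<in>{1..n}. X i \<omega> \<le> x}" X \<omega>] assms by auto
  then have "emp_df X n \<omega> (X j \<omega>) = emp_df X n \<omega> x"
    by (intro emp_df_cong) (auto intro: order_trans)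
  with j show thesis by (intro that) auto
qed

lemma emp_df_ge_eq_atLeast:
  assumes n: "n \<ge> 1" and p: "0 < p" "p \<le> 1"
  obtains j where "j \<in> {1..n}" "{x. p \<le> emp_df X n \<omega> x} = {X j \<omega>..}"
proof -
  define C where "C = {i\<in>{1..n}. p \<le> emp_df X n \<omega> (X i \<omega>)}"
  obtain i0 where "i0 \<in> {1..n}" "\<And>i. i \<in> {1..n} \<Longrightarrow> X i \<omega> \<le> X i0 \<omega>"
    using exists_max_sample[of "{1..n}" X \<omega>] n by auto
  then have "i0 \<in> C" using emp_df_at_max_sample[OF n, of X \<omega>] p by (auto simp: C_def)
  then obtain j where j: "j \<in> C" "\<And>i. i \<in> C \<Longrightarrow> X j \<omega> \<le> X i \<omega>"
    using exists_min_sample[of C X \<omega>] by (auto simp: C_def)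
  have "X j \<omega> \<le> x" if x: "p \<le> emp_df X n \<omega> x" for x
  proof -
    have "\<exists>i\<in>{1..n}. X i \<omega> \<le> x"
      using emp_df_below_sample[of n x X \<omega>] x p by force
    then obtain i where "i \<in> {1..n}" "X i \<omega> \<le> x" by blast
    then obtain k where k: "k \<in> {1..n}" "X k \<omega> \<le> x" "emp_df X n \<omega> (X k \<omega>) = emp_df X n \<omega> x"
      by (rule exists_sample_same_emp_df)
    then have "k \<in> C" using x by (auto simp: C_def)
    then show ?thesis using j(2) k(2) by (meson order_trans)
  qed
  moreover have "p \<le> emp_df X n \<omega> x" if "X j \<omega> \<le> x" for x
    using j(1) emp_df_mono[OF that, of X n \<omega>] by (simp add: C_def)
  ultimately show thesis using j(1) by (intro that[of j]) (auto simp: C_def)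
qed

lemma emp_df_quantile_ge:
  assumes "n \<ge> 1" "0 < p" "p \<le> 1"
  shows "p \<le> emp_df X n \<omega> (quantile (emp_df X n \<omega>) p)"
proof -
  obtain j where "{x. p \<le> emp_df X n \<omega> x} = {X j \<omega>..}" using emp_df_ge_eq_atLeast[OF assms] .
  then show ?thesis by (simp add: quantile_eq_of_atLeast) (metis atLeast_iff mem_Collect_eq order_refl)
qed

lemma exists_below_same_count:
  fixes X :: "nat \<Rightarrow> 'a \<Rightarrow> real"
  obtains w where "w < z" "\<And>i. i \<in> {1..n} \<Longrightarrow> X i \<omega> \<le> w \<longleftrightarrow> X i \<omega> < z"
proof -
  define w where "w = Max (insert (z - 1) {X i \<omega> |i. i \<in> {1..n} \<and> X i \<omega> < z})"
  have fin: "finite (insert (z - 1) {X i \<omega> |i. i \<in> {1..n} \<and> X i \<omega> < z})" by simp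
  have "w < z" unfolding w_def using fin by (subst Max_less_iff) auto
  moreover have "X i \<omega> \<le> w" if "i \<in> {1..n}" "X i \<omega> < z" for i
    unfolding w_def using fin that by (intro Max_ge) auto
  ultimately show thesis by (intro that) (auto intro: le_less_trans)
qed

text \<open>Without ties, the empirical distribution function jumps by exactly \<open>1 / n\<close> at the quantile.\<close>

lemma emp_df_quantile_less:
  assumes n: "n \<ge> 1" and p: "0 < p" "p \<le> 1" and inj: "inj_on (\<lambda>i. X i \<omega>) {1..n}"
  shows "emp_df X n \<omega> (quantile (emp_df X n \<omega>) p) < p + 1 / real n"
proof -
  obtain j where j: "j \<in> {1..n}" and ge: "{x. p \<le> emp_df X n \<omega> x} = {X j \<omega>..}"
    using emp_df_ge_eq_atLeast[OF n p] .
  define z where "z = X j \<omega>"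
  obtain w where w: "w < z" "\<And>i. i \<in> {1..n} \<Longrightarrow> X i \<omega> \<le> w \<longleftrightarrow> X i \<omega> < z"
    using exists_below_same_count[where z=z and n=n and X=X and \<omega>=\<omega>] by blast
  have "i = j" if "i \<in> {1..n}" "X i \<omega> = z" for i
    using inj_onD[OF inj _ that(1) j] that(2) by (simp add: z_def)
  then have "{i\<in>{1..n}. X i \<omega> \<le> z} = insert j {i\<in>{1..n}. X i \<omega> \<le> w}"
    using w(2) j by (auto simp: z_def order_le_less)
  moreover have "j \<notin> {i\<in>{1..n}. X i \<omega> \<le> w}" using w by (auto simp: z_def)
  ultimately have "emp_df X n \<omega> z = emp_df X n \<omega> w + 1 / real n"
    by (simp add: emp_df_eq_card add_divide_distrib)
  moreover have "\<not> p \<le> emp_df X n \<omega> w" using ge w(1) by (auto simp: z_def set_eq_iff)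
  ultimately show ?thesis using ge by (simp add: quantile_eq_of_atLeast z_def)
qed

context prob_space
begin

lemma distribution_function_props:
  fixes X :: "'a \<Rightarrow> real"
  assumes rv: "X \<in> borel_measurable M" and F: "\<And>x. prob {\<omega>\<in>space M. X \<omega> \<le> x} = F x"
  shows "\<And>x y. x \<le> y \<Longrightarrow> F x \<le> F y" "(F \<longlongrightarrow> 0) at_bot" "(F \<longlongrightarrow> 1) at_top"
proof -
  interpret D: real_distribution "distr M borel X" using rv by simp
  have "F x = cdf (distr M borel X) x" for x
    using rv F[of x] by (simp add: cdf_def measure_distr vimage_def Int_def conj_commute)
  then have "F = cdf (distr M borel X)" ..
  then show "\<And>x y. x \<le> y \<Longrightarrow> F x \<le> F y" "(F \<longlongrightarrow> 0) at_bot" "(F \<longlongrightarrow> 1) at_top"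
    using D.cdf_nondecreasing D.cdf_lim_at_bot D.cdf_lim_at_top_prob by auto
qed

lemma phi_mix_le_cubic_rate:
  fixes X :: "nat \<Rightarrow> 'a \<Rightarrow> real"
  assumes rv: "\<And>i. X i \<in> borel_measurable M" and rate: "phi_mix M X \<in> O(\<lambda>n. real n powr (-3))"
  obtains Cp where "\<And>m. m \<ge> 1 \<Longrightarrow> phi_mix M X m \<le> Cp / real m ^ 3"
proof -
  obtain c where "eventually (\<lambda>n. norm (phi_mix M X n) \<le> c * norm (real n powr (-3))) at_top"
    using landau_o.bigE[OF rate] by blast
  then obtain n0 where c: "\<And>n. n \<ge> n0 \<Longrightarrow> norm (phi_mix M X n) \<le> c * norm (real n powr (-3))"
    by (auto simp: eventually_at_top_linorder)
  define Cp where "Cp = max c (real n0 ^ 3)"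
  have "phi_mix M X m \<le> Cp / real m ^ 3" if m: "m \<ge> 1" for m
  proof (cases "m \<ge> n0")
    case True
    have "real m powr (-3) = 1 / real m ^ 3" using m by (simp add: powr_minus powr_realpow divide_inverse)
    then have "phi_mix M X m \<le> c / real m ^ 3" using c[OF True] by simp
    also have "\<dots> \<le> Cp / real m ^ 3" by (intro divide_right_mono) (auto simp: Cp_def)
    finally show ?thesis .
  next
    case False
    have "phi_mix M X m \<le> 1" using phi_mix_le_1[of X, OF rv] .
    also have "1 \<le> real n0 ^ 3 / real m ^ 3" using False m by (simp add: power_mono)
    also have "\<dots> \<le> Cp / real m ^ 3" by (intro divide_right_mono) (auto simp: Cp_def)
    finally show ?thesis .
  qed
  then show thesis by (rule that)
qed

lemma sum_phi_mix_bounded: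
  fixes X :: "nat \<Rightarrow> 'a \<Rightarrow> real"
  assumes rv: "\<And>i. X i \<in> borel_measurable M" and Cp: "\<And>m. m \<ge> 1 \<Longrightarrow> phi_mix M X m \<le> Cp / real m ^ 3"
  obtains \<Phi> where "\<And>D. (\<Sum>d=1..D. phi_mix M X d) \<le> \<Phi>"
proof
  define g where "g m = Cp * inverse (real m ^ 3)" for m :: nat
  have "summable g" unfolding g_def by (intro summable_mult inverse_power_summable) auto
  have "0 \<le> Cp" using Cp[of 1] phi_mix_nonneg[of X, OF rv, of 1] by simp
  fix D
  have "(\<Sum>d=1..D. phi_mix M X d) \<le> (\<Sum>d=1..D. g d)"
    using Cp by (intro sum_mono) (auto simp: g_def divide_inverse)
  also have "\<dots> \<le> suminf g" by (rule sum_le_suminf[OF \<open>summable g\<close>]) (use \<open>0 \<le> Cp\<close> in \<open>auto simp: g_def\<close>)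
  finally show "(\<Sum>d=1..D. phi_mix M X d) \<le> suminf g" .
qed

lemma AE_no_ties:
  fixes X :: "nat \<Rightarrow> 'a \<Rightarrow> real"
  assumes rv: "\<And>i. X i \<in> borel_measurable M"
    and ties: "\<And>i j. i \<ge> 1 \<Longrightarrow> j \<ge> 1 \<Longrightarrow> i \<noteq> j \<Longrightarrow> prob {\<omega> \<in> space M. X i \<omega> = X j \<omega>} = 0"
  shows "AE \<omega> in M. \<forall>n. inj_on (\<lambda>i. X i \<omega>) {1..n}"
proof -
  have "AE \<omega> in M. i \<ge> 1 \<longrightarrow> j \<ge> 1 \<longrightarrow> i \<noteq> j \<longrightarrow> X i \<omega> \<noteq> X j \<omega>" for i j
  proof (cases "i \<ge> 1 \<and> j \<ge> 1 \<and> i \<noteq> j")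
    case True
    have "{\<omega> \<in> space M. X i \<omega> = X j \<omega>} \<in> sets M" using rv[of i] rv[of j] by measurable
    then have "{\<omega> \<in> space M. X i \<omega> = X j \<omega>} \<in> null_sets M"
      using ties[of i j] True by (simp add: null_sets_def emeasure_eq_measure)
    then show ?thesis by (rule AE_I') auto
  qed auto
  then have "AE \<omega> in M. \<forall>i j. i \<ge> 1 \<longrightarrow> j \<ge> 1 \<longrightarrow> i \<noteq> j \<longrightarrow> X i \<omega> \<noteq> X j \<omega>"
    by (simp add: AE_all_countable)
  then show ?thesis
  proof eventually_elim
    case (elim \<omega>)
    show ?case unfolding inj_on_def using elim by (metis atLeastAtMost_iff)
  qed
qed

end

section \<open>The Bahadur representation\<close>

lemma sum_indicator_atMost_eq_emp_df:
  assumes "n \<ge> 1" "\<omega> \<in> space M"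
  shows "(\<Sum>i\<in>{1..n}. indicator (X i -` {..x} \<inter> space M) \<omega> - c) = real n * (emp_df X n \<omega> x - c)"
proof -
  have "indicator (X i -` {..x} \<inter> space M) \<omega> = (if X i \<omega> \<le> x then 1 else 0 :: real)" for i
    using assms(2) by (auto simp: indicator_def)
  then show ?thesis using assms(1) by (simp add: sum_subtractf emp_df_def algebra_simps)
qed

lemma sum_indicator_greaterThanAtMost_eq_emp_df:
  assumes "n \<ge> 1" "\<omega> \<in> space M" "x \<le> y"
  shows "(\<Sum>i\<in>{1..n}. indicator (X i -` {x<..y} \<inter> space M) \<omega> - c)
    = real n * (emp_df X n \<omega> y - emp_df X n \<omega> x - c)"
proof -
  have ind: "indicator (X i -` {x<..y} \<inter> space M) \<omega>
      = (if X i \<omega> \<le> y then 1 else 0) - (if X i \<omega> \<le> x then 1 else 0 :: real)" for i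
    using assms(2,3) by (auto simp: indicator_def)
  have "(\<Sum>i\<in>{1..n}. indicator (X i -` {x<..y} \<inter> space M) \<omega> - c)
      = (\<Sum>i\<in>{1..n}. if X i \<omega> \<le> y then 1 else 0) - (\<Sum>i\<in>{1..n}. if X i \<omega> \<le> x then 1 else 0 :: real)
        - real n * c"
    by (simp only: ind sum_subtractf) simp
  then show ?thesis using assms(1) by (simp add: emp_df_def algebra_simps)
qed

definition fourth_root :: "nat \<Rightarrow> real" where "fourth_root n = sqrt (sqrt (real n))"

lemma fourth_root_nonneg: "0 \<le> fourth_root n"
  by (simp add: fourth_root_def)

lemma fourth_root_pow4: "fourth_root n ^ 4 = real n"
proof -
  have "fourth_root n ^ 4 = (fourth_root n ^ 2) ^ 2" by (simp flip: power_mult)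
  then show ?thesis by (simp add: fourth_root_def)
qed

lemma fourth_root_sq: "fourth_root n ^ 2 = sqrt (real n)"
  by (simp add: fourth_root_def)

lemma fourth_root_ge_1: "n \<ge> 1 \<Longrightarrow> fourth_root n \<ge> 1"
  by (simp add: fourth_root_def)

locale bahadur_setting = prob_space M for M :: "'a measure" +
  fixes X :: "nat \<Rightarrow> 'a \<Rightarrow> real" and F f f' :: "real \<Rightarrow> real"
    and p \<xi> d fB Bd Cp \<Phi> :: real
  assumes random_variables: "\<And>i. X i \<in> borel_measurable M"
    and marginal: "\<And>i x. i \<ge> 1 \<Longrightarrow> prob {\<omega> \<in> space M. X i \<omega> \<le> x} = F x"
    and no_ties: "AE \<omega> in M. \<forall>n. inj_on (\<lambda>i. X i \<omega>) {1..n}"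
    and p: "0 < p" "p \<le> 1" and F_\<xi>: "F \<xi> = p"
    and d: "d > 0"
    and F_deriv: "\<And>x. x \<in> {\<xi>-d..\<xi>+d} \<Longrightarrow> (F has_real_derivative f x) (at x)"
    and f_deriv: "\<And>x. x \<in> {\<xi>-d..\<xi>+d} \<Longrightarrow> (f has_real_derivative f' x) (at x)"
    and f_bound: "\<And>x. x \<in> {\<xi>-d..\<xi>+d} \<Longrightarrow> \<bar>f x\<bar> \<le> fB"
    and f'_bound: "\<And>x. x \<in> {\<xi>-d..\<xi>+d} \<Longrightarrow> \<bar>f' x\<bar> \<le> Bd"
    and f_\<xi>_pos: "f \<xi> > 0"
    and phi_rate: "\<And>m. m \<ge> 1 \<Longrightarrow> phi_mix M X m \<le> Cp / real m ^ 3"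
    and phi_sum: "\<And>D. (\<Sum>m=1..D. phi_mix M X m) \<le> \<Phi>"
begin

lemma prob_vimage_atMost: "i \<ge> 1 \<Longrightarrow> prob (X i -` {..x} \<inter> space M) = F x"
  using marginal[of i x] by (simp add: vimage_def Int_def conj_commute)

lemma prob_vimage_greaterThanAtMost:
  assumes "i \<ge> 1" "x \<le> y"
  shows "prob (X i -` {x<..y} \<inter> space M) = F y - F x"
proof -
  have "X i -` {x<..y} \<inter> space M = (X i -` {..y} \<inter> space M) - (X i -` {..x} \<inter> space M)" by auto
  moreover have "X i -` {..x} \<inter> space M \<subseteq> X i -` {..y} \<inter> space M" using assms(2) by auto
  ultimately show ?thesis
    using assms(1) random_variables[of i]
    by (simp add: finite_measure_Diff measurable_sets prob_vimage_atMost)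
qed

lemma F_le_1: "F x \<le> 1"
  using prob_le_1[of "X 1 -` {..x} \<inter> space M"] prob_vimage_atMost[of 1 x] by linarith

lemma fB_pos: "0 < fB" and Bd_nonneg: "0 \<le> Bd"
  using f_bound[of \<xi>] f'_bound[of \<xi>] d f_\<xi>_pos by auto

lemma F_lipschitz:
  assumes "x \<in> {\<xi>-d..\<xi>+d}" "y \<in> {\<xi>-d..\<xi>+d}"
  shows "\<bar>F y - F x\<bar> \<le> fB * \<bar>y - x\<bar>"
proof -
  have "norm (F y - F x) \<le> fB * norm (y - x)"
  proof (rule field_differentiable_bound[where S="{\<xi>-d..\<xi>+d}" and f'=f])
    show "(F has_field_derivative f z) (at z within {\<xi>-d..\<xi>+d})" if "z \<in> {\<xi>-d..\<xi>+d}" for z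
      using F_deriv[OF that] by (rule has_field_derivative_at_within)
  qed (use assms f_bound in auto)
  then show ?thesis by simp
qed

lemma F_taylor: "x \<in> {\<xi>-d..\<xi>+d} \<Longrightarrow> \<bar>F x - p - f \<xi> * (x - \<xi>)\<bar> \<le> Bd * (x - \<xi>)\<^sup>2"
  using taylor_bound_first_order[where c=\<xi> and d=d, OF F_deriv f_deriv f'_bound] F_\<xi> by simp

lemma prob_emp_df_dev_le:
  assumes n: "n \<ge> 1" and t: "t > 0" "t * fourth_root n \<le> 1"
  shows "prob {\<omega>\<in>space M. c \<le> \<bar>emp_df X n \<omega> x - F x\<bar>}
    \<le> 4 * exp (- t * (real n * c / 2) + 2 * real n * t\<^sup>2 * (1 + 2 * \<Phi>) + 32 * exp 1 * Cp)"
proof -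
  have "{\<omega>\<in>space M. c \<le> \<bar>emp_df X n \<omega> x - F x\<bar>}
      = {\<omega>\<in>space M. 2 * (real n * c / 2) \<le> \<bar>\<Sum>i\<in>{1..n}. indicator (X i -` {..x} \<inter> space M) \<omega> - F x\<bar>}"
    using n sum_indicator_atMost_eq_emp_df[OF n, where M=M and X=X and x=x and c="F x"] by (auto simp: abs_mult)
  also have "prob \<dots> \<le> 4 * exp (- t * (real n * c / 2) + 2 * real n * t\<^sup>2 * 1 * (1 + 2 * \<Phi>) + 32 * exp 1 * Cp)"
    by (rule indicator_sum_tail_bound[OF random_variables _ prob_vimage_atMost F_le_1 phi_sum phi_rate
          n fourth_root_nonneg fourth_root_pow4 t]) auto
  finally show ?thesis by simp
qed

lemma prob_increment_dev_le_ordered: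
  assumes n: "n \<ge> 1" and t: "t > 0" "t * fourth_root n \<le> 1" and xy: "x \<le> y" "F y - F x \<le> qb"
  shows "prob {\<omega>\<in>space M. c \<le> \<bar>emp_df X n \<omega> y - emp_df X n \<omega> x - (F y - F x)\<bar>}
    \<le> 4 * exp (- t * (real n * c / 2) + 2 * real n * t\<^sup>2 * qb * (1 + 2 * \<Phi>) + 32 * exp 1 * Cp)"
proof -
  have "{\<omega>\<in>space M. c \<le> \<bar>emp_df X n \<omega> y - emp_df X n \<omega> x - (F y - F x)\<bar>}
      = {\<omega>\<in>space M. 2 * (real n * c / 2) \<le> \<bar>\<Sum>i\<in>{1..n}. indicator (X i -` {x<..y} \<inter> space M) \<omega> - (F y - F x)\<bar>}"
    using n sum_indicator_greaterThanAtMost_eq_emp_df[OF n _ xy(1), where M=M and X=X and c="F y - F x"]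
    by (auto simp: abs_mult)
  also have "prob \<dots> \<le> 4 * exp (- t * (real n * c / 2) + 2 * real n * t\<^sup>2 * qb * (1 + 2 * \<Phi>) + 32 * exp 1 * Cp)"
    using xy by (intro indicator_sum_tail_bound[OF random_variables _ _ _ phi_sum phi_rate
          n fourth_root_nonneg fourth_root_pow4 t]) (auto simp: prob_vimage_greaterThanAtMost)
  finally show ?thesis .
qed

lemma prob_increment_dev_le:
  assumes n: "n \<ge> 1" and t: "t > 0" "t * fourth_root n \<le> 1" and qb: "\<bar>F y - F x\<bar> \<le> qb"
  shows "prob {\<omega>\<in>space M. c \<le> \<bar>emp_df X n \<omega> y - emp_df X n \<omega> x - (F y - F x)\<bar>}
    \<le> 4 * exp (- t * (real n * c / 2) + 2 * real n * t\<^sup>2 * qb * (1 + 2 * \<Phi>) + 32 * exp 1 * Cp)"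
proof (cases "x \<le> y")
  case True
  then show ?thesis using prob_increment_dev_le_ordered[OF n t True] qb by simp
next
  case False
  have "\<bar>emp_df X n \<omega> y - emp_df X n \<omega> x - (F y - F x)\<bar> = \<bar>emp_df X n \<omega> x - emp_df X n \<omega> y - (F x - F y)\<bar>"
    for \<omega> by linarith
  then show ?thesis using prob_increment_dev_le_ordered[OF n t, of y x] qb False by (simp add: abs_minus_commute)
qed

text \<open>The sample quantile is localised in \<open>[\<xi> - radius n, \<xi> + radius n]\<close>, and the increments of
  the empirical process are controlled on a grid of mesh \<open>n\<^sup>-\<^sup>3\<^sup>/\<^sup>4\<close> covering this interval.\<close>

definition radius :: "nat \<Rightarrow> real" where "radius n = 12 * ln (real n) / (f \<xi> * sqrt (real n))"
definition mesh :: "nat \<Rightarrow> real" where "mesh n = 1 / fourth_root n ^ 3"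
definition grid_size :: "nat \<Rightarrow> nat" where "grid_size n = nat \<lceil>radius n / mesh n\<rceil> + 1"
definition grid :: "nat \<Rightarrow> int \<Rightarrow> real" where "grid n k = \<xi> + real_of_int k * mesh n"

definition incr_dev :: "nat \<Rightarrow> 'a \<Rightarrow> real \<Rightarrow> real" where
  "incr_dev n \<omega> x = emp_df X n \<omega> x - emp_df X n \<omega> \<xi> - (F x - F \<xi>)"

text \<open>The constant is chosen such that the tail bound for one grid point is \<open>O(n\<^sup>-\<^sup>4)\<close>.\<close>

definition incr_const :: real where "incr_const = 48 * fB * (1 + 2 * \<Phi>) / f \<xi> + 4"
definition incr_tol :: "nat \<Rightarrow> real" where "incr_tol n = 2 * incr_const * ln (real n) * fourth_root n / real n"

definition bad_event :: "nat \<Rightarrow> 'a set" where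
  "bad_event n =
     {\<omega>\<in>space M. f \<xi> * radius n / 2 \<le> \<bar>emp_df X n \<omega> (\<xi> + radius n) - F (\<xi> + radius n)\<bar>}
   \<union> {\<omega>\<in>space M. f \<xi> * radius n / 2 \<le> \<bar>emp_df X n \<omega> (\<xi> - radius n) - F (\<xi> - radius n)\<bar>}
   \<union> (\<Union>k\<in>{- int (grid_size n)..int (grid_size n)}. {\<omega>\<in>space M. incr_tol n \<le> \<bar>incr_dev n \<omega> (grid n k)\<bar>})"

definition large :: "nat \<Rightarrow> bool" where
  "large n \<longleftrightarrow> 3 \<le> n \<and> radius n + 2 * mesh n \<le> d \<and> 2 * mesh n \<le> radius n \<and> Bd * radius n \<le> f \<xi> / 2
     \<and> 2 * real (grid_size n) + 1 \<le> real n ^ 2"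

lemma radius_nonneg: "large n \<Longrightarrow> 0 \<le> radius n"
  using f_\<xi>_pos by (simp add: large_def radius_def)

lemma mesh_pos: "large n \<Longrightarrow> 0 < mesh n"
  by (simp add: large_def mesh_def fourth_root_def)

lemma grid_size_le:
  assumes "large n"
  shows "real (grid_size n) \<le> radius n / mesh n + 2"
proof -
  have "0 \<le> radius n / mesh n" using radius_nonneg[OF assms] mesh_pos[OF assms] by simp
  then show ?thesis by (simp add: grid_size_def) linarith
qed

lemma eventually_large: "eventually large at_top"
proof -
  define A where "A = 12 / f \<xi>"
  define e where "e = f \<xi> / (2 * (Bd + 1))"
  have "A > 0" "e > 0" using f_\<xi>_pos Bd_nonneg by (auto simp: A_def e_def)
  have "eventually (\<lambda>n::nat. A * ln (real n) / sqrt (real n) + 2 * (1 / sqrt (sqrt (real n)) ^ 3) \<le> d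
      \<and> 2 * (1 / sqrt (sqrt (real n)) ^ 3) \<le> A * ln (real n) / sqrt (real n)
      \<and> A * ln (real n) / sqrt (real n) \<le> e
      \<and> 2 * (A * ln (real n) / sqrt (real n) / (1 / sqrt (sqrt (real n)) ^ 3) + 2) + 1 \<le> real n ^ 2) at_top"
    using \<open>A > 0\<close> \<open>e > 0\<close> d by (intro eventually_conj; real_asymp)
  then show ?thesis using eventually_ge_at_top[of 3]
  proof eventually_elim
    case (elim n)
    have radius: "radius n = A * ln (real n) / sqrt (real n)" by (simp add: radius_def A_def)
    have mesh: "mesh n = 1 / sqrt (sqrt (real n)) ^ 3" by (simp add: mesh_def fourth_root_def)
    have "0 \<le> radius n" "0 < mesh n" using elim(2) \<open>A > 0\<close> by (simp_all add: radius mesh)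
    have "Bd * radius n \<le> (Bd + 1) * e"
      using elim(1) Bd_nonneg \<open>0 \<le> radius n\<close> by (intro mult_mono) (auto simp: radius)
    also have "\<dots> = f \<xi> / 2" using Bd_nonneg by (simp add: e_def field_simps)
    finally have "Bd * radius n \<le> f \<xi> / 2" .
    moreover have "real (grid_size n) \<le> radius n / mesh n + 2"
      using \<open>0 \<le> radius n\<close> \<open>0 < mesh n\<close> by (simp add: grid_size_def) linarith
    ultimately show ?case using elim by (auto simp: large_def radius mesh)
  qed
qed

lemma grid_near_\<xi>:
  assumes "large n" "k \<in> {- int (grid_size n)..int (grid_size n)}"
  shows "\<bar>grid n k - \<xi>\<bar> \<le> radius n + 2 * mesh n" "grid n k \<in> {\<xi>-d..\<xi>+d}"
proof -
  note h = mesh_pos[OF assms(1)]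
  have "\<bar>grid n k - \<xi>\<bar> = \<bar>real_of_int k\<bar> * mesh n" using h by (simp add: grid_def abs_mult)
  also have "\<dots> \<le> real (grid_size n) * mesh n" using assms(2) h by (intro mult_right_mono) auto
  also have "\<dots> \<le> (radius n / mesh n + 2) * mesh n"
    using grid_size_le[OF assms(1)] h by (intro mult_right_mono) auto
  also have "\<dots> = radius n + 2 * mesh n" using h by (simp add: field_simps)
  finally show "\<bar>grid n k - \<xi>\<bar> \<le> radius n + 2 * mesh n" .
  then show "grid n k \<in> {\<xi>-d..\<xi>+d}" using assms(1) by (auto simp: large_def)
qed

lemma prob_dev_event_le:
  assumes "large n"
  shows "prob {\<omega>\<in>space M. f \<xi> * radius n / 2 \<le> \<bar>emp_df X n \<omega> x - F x\<bar>}
    \<le> 4 * exp (2 * (1 + 2 * \<Phi>) + 32 * exp 1 * Cp) / real n ^ 3"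
proof -
  have n: "n \<ge> 1" "real n > 0" using assms by (auto simp: large_def)
  have "fourth_root n \<le> fourth_root n ^ 2"
    using fourth_root_ge_1[OF n(1)] by (simp add: power2_eq_square)
  then have t: "1 / sqrt (real n) > 0" "1 / sqrt (real n) * fourth_root n \<le> 1"
    using n by (auto simp: fourth_root_sq field_simps)
  have "prob {\<omega>\<in>space M. f \<xi> * radius n / 2 \<le> \<bar>emp_df X n \<omega> x - F x\<bar>}
    \<le> 4 * exp (- (1 / sqrt (real n)) * (real n * (f \<xi> * radius n / 2) / 2)
        + 2 * real n * (1 / sqrt (real n))\<^sup>2 * (1 + 2 * \<Phi>) + 32 * exp 1 * Cp)"
    by (rule prob_emp_df_dev_le[OF n(1) t])
  also have "- (1 / sqrt (real n)) * (real n * (f \<xi> * radius n / 2) / 2)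
        + 2 * real n * (1 / sqrt (real n))\<^sup>2 * (1 + 2 * \<Phi>) + 32 * exp 1 * Cp
      = 2 * (1 + 2 * \<Phi>) + 32 * exp 1 * Cp - real 3 * ln (real n)"
    using n f_\<xi>_pos by (simp add: radius_def power_divide field_simps)
  also have "exp \<dots> = exp (2 * (1 + 2 * \<Phi>) + 32 * exp 1 * Cp) / real n ^ 3"
    using n(2) by (rule exp_diff_mult_ln)
  finally show ?thesis by simp
qed

lemma prob_incr_event_le:
  assumes "large n" "k \<in> {- int (grid_size n)..int (grid_size n)}"
  shows "prob {\<omega>\<in>space M. incr_tol n \<le> \<bar>incr_dev n \<omega> (grid n k)\<bar>} \<le> 4 * exp (32 * exp 1 * Cp) / real n ^ 4"
proof -
  have n: "n \<ge> 1" "real n > 0" using assms by (auto simp: large_def)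
  define r where "r = fourth_root n"
  have r: "r \<ge> 1" "r ^ 2 = sqrt (real n)" "r ^ 4 = real n"
    using fourth_root_ge_1[OF n(1)] fourth_root_sq fourth_root_pow4 by (auto simp: r_def)
  have t: "1 / r > 0" "1 / r * fourth_root n \<le> 1" using r by (auto simp: r_def)
  have "\<bar>F (grid n k) - F \<xi>\<bar> \<le> fB * \<bar>grid n k - \<xi>\<bar>"
    using grid_near_\<xi>(2)[OF assms] d by (intro F_lipschitz) auto
  also have "\<dots> \<le> fB * (2 * radius n)"
    using grid_near_\<xi>(1)[OF assms] assms(1) fB_pos by (intro mult_left_mono) (auto simp: large_def)
  finally have qb: "\<bar>F (grid n k) - F \<xi>\<bar> \<le> 2 * fB * radius n" by simp
  have "prob {\<omega>\<in>space M. incr_tol n \<le> \<bar>incr_dev n \<omega> (grid n k)\<bar>}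
    \<le> 4 * exp (- (1 / r) * (real n * incr_tol n / 2) + 2 * real n * (1 / r)\<^sup>2 * (2 * fB * radius n) * (1 + 2 * \<Phi>)
        + 32 * exp 1 * Cp)"
    unfolding incr_dev_def by (rule prob_increment_dev_le[OF n(1) t qb])
  also have "- (1 / r) * (real n * incr_tol n / 2) + 2 * real n * (1 / r)\<^sup>2 * (2 * fB * radius n) * (1 + 2 * \<Phi>)
        + 32 * exp 1 * Cp = 32 * exp 1 * Cp - real 4 * ln (real n)"
    using n r f_\<xi>_pos
    by (simp add: incr_tol_def incr_const_def radius_def power_divide r_def[symmetric] field_simps)
  also have "exp \<dots> = exp (32 * exp 1 * Cp) / real n ^ 4"
    using n(2) by (rule exp_diff_mult_ln)
  finally show ?thesis by simp
qed

lemma measurable_emp_df [measurable]: "(\<lambda>\<omega>. emp_df X n \<omega> x) \<in> borel_measurable M"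
  unfolding emp_df_def using random_variables by measurable

lemma measurable_incr_dev [measurable]: "(\<lambda>\<omega>. incr_dev n \<omega> x) \<in> borel_measurable M"
  unfolding incr_dev_def by measurable

lemma sets_bad_event: "bad_event n \<in> sets M"
  unfolding bad_event_def by measurable

lemma prob_bad_event_le:
  assumes "large n"
  shows "prob (bad_event n) \<le> (8 * exp (2 * (1 + 2 * \<Phi>) + 32 * exp 1 * Cp) + 4 * exp (32 * exp 1 * Cp)) / real n ^ 2"
proof -
  define e1 where "e1 = 4 * exp (2 * (1 + 2 * \<Phi>) + 32 * exp 1 * Cp)"
  define e2 where "e2 = 4 * exp (32 * exp 1 * Cp)"
  define dev where "dev x = {\<omega>\<in>space M. f \<xi> * radius n / 2 \<le> \<bar>emp_df X n \<omega> x - F x\<bar>}" for x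
  define incr where "incr k = {\<omega>\<in>space M. incr_tol n \<le> \<bar>incr_dev n \<omega> (grid n k)\<bar>}" for k
  define K where "K = {- int (grid_size n)..int (grid_size n)}"
  have [measurable]: "dev x \<in> sets M" "incr k \<in> sets M" for x k unfolding dev_def incr_def by measurable
  have n: "real n \<ge> 1" using assms by (simp add: large_def)
  have "prob (\<Union>k\<in>K. incr k) \<le> (\<Sum>k\<in>K. prob (incr k))"
    by (rule finite_measure_subadditive_finite) (auto simp: K_def)
  also have "\<dots> \<le> real (card K) * (e2 / real n ^ 4)"
    using prob_incr_event_le[OF assms] by (intro sum_bounded_above) (simp add: incr_def K_def e2_def)
  finally have incr_bound: "prob (\<Union>k\<in>K. incr k) \<le> (2 * real (grid_size n) + 1) * e2 / real n ^ 4"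
    by (simp add: K_def)
  have dev_bound: "prob (dev x) \<le> e1 / real n ^ 3" for x
    unfolding dev_def e1_def by (rule prob_dev_event_le[OF assms])
  have "prob (bad_event n) \<le> prob (dev (\<xi> + radius n)) + prob (dev (\<xi> - radius n)) + prob (\<Union>k\<in>K. incr k)"
    unfolding bad_event_def dev_def[symmetric] incr_def[symmetric] K_def[symmetric]
    by (intro order_trans[OF measure_Un_le] add_right_mono measure_Un_le) measurable
  then have "prob (bad_event n) \<le> 2 * e1 / real n ^ 3 + (2 * real (grid_size n) + 1) * e2 / real n ^ 4"
    using dev_bound[of "\<xi> + radius n"] dev_bound[of "\<xi> - radius n"] incr_bound by linarith
  also have "\<dots> \<le> 2 * e1 / real n ^ 2 + real n ^ 2 * e2 / real n ^ 4"
    using assms n by (intro add_mono divide_left_mono divide_right_mono mult_right_mono power_increasing)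
      (auto simp: large_def e1_def e2_def)
  also have "\<dots> = (2 * e1 + e2) / real n ^ 2"
    using n by (simp add: field_simps power_numeral_reduce)
  finally show ?thesis by (simp add: e1_def e2_def)
qed

lemma AE_eventually_not_bad: "AE \<omega> in M. eventually (\<lambda>n. \<omega> \<notin> bad_event n) at_top"
proof -
  define C where "C = 8 * exp (2 * (1 + 2 * \<Phi>) + 32 * exp 1 * Cp) + 4 * exp (32 * exp 1 * Cp)"
  have "summable (\<lambda>n. prob (bad_event n))"
  proof (rule summable_comparison_test_ev)
    show "eventually (\<lambda>n. norm (prob (bad_event n)) \<le> C * inverse (real n ^ 2)) at_top"
      using eventually_large
    proof eventually_elim
      case (elim n)
      show ?case using prob_bad_event_le[OF elim] by (simp add: C_def divide_inverse)
    qed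
    show "summable (\<lambda>n. C * inverse (real n ^ 2))" by (intro summable_mult inverse_power_summable) auto
  qed
  then have "AE \<omega> in M. eventually (\<lambda>n. \<omega> \<in> space M - bad_event n) at_top"
    by (intro borel_cantelli_AE1 sets_bad_event) (simp add: less_top[symmetric])
  then show ?thesis
  proof eventually_elim
    case (elim \<omega>)
    show ?case using elim by (rule eventually_mono) simp
  qed
qed

lemma F_taylor_near_\<xi>:
  assumes "large n" "\<bar>x - \<xi>\<bar> \<le> radius n"
  shows "\<bar>F x - p - f \<xi> * (x - \<xi>)\<bar> \<le> Bd * (radius n)\<^sup>2"
proof -
  have "x \<in> {\<xi>-d..\<xi>+d}" using assms mesh_pos[OF assms(1)] by (auto simp: large_def)
  then have "\<bar>F x - p - f \<xi> * (x - \<xi>)\<bar> \<le> Bd * (x - \<xi>)\<^sup>2" by (rule F_taylor)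
  also have "\<dots> \<le> Bd * (radius n)\<^sup>2"
    using assms Bd_nonneg by (intro mult_left_mono) (auto simp: abs_le_square_iff[symmetric])
  finally show ?thesis .
qed

lemma quantile_near_\<xi>:
  assumes n: "large n" and \<omega>: "\<omega> \<notin> bad_event n" "\<omega> \<in> space M"
  shows "\<bar>quantile (emp_df X n \<omega>) p - \<xi>\<bar> \<le> radius n"
proof -
  define a where "a = radius n"
  have "0 \<le> a" using radius_nonneg[OF n] by (simp add: a_def)
  have "Bd * a \<le> f \<xi> / 2" using n by (simp add: large_def a_def)
  then have "Bd * a * a \<le> f \<xi> / 2 * a" using \<open>0 \<le> a\<close> by (rule mult_right_mono)
  then have "Bd * a\<^sup>2 \<le> f \<xi> / 2 * a" by (simp add: power2_eq_square mult.assoc)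
  then have "p + f \<xi> * a / 2 \<le> F (\<xi> + a)" "F (\<xi> - a) \<le> p - f \<xi> * a / 2"
    using F_taylor_near_\<xi>[OF n, of "\<xi> + a"] F_taylor_near_\<xi>[OF n, of "\<xi> - a"] \<open>0 \<le> a\<close>
    by (auto simp: a_def abs_le_iff)
  moreover have "\<bar>emp_df X n \<omega> (\<xi> + a) - F (\<xi> + a)\<bar> < f \<xi> * a / 2"
    "\<bar>emp_df X n \<omega> (\<xi> - a) - F (\<xi> - a)\<bar> < f \<xi> * a / 2"
    using \<omega> by (auto simp: bad_event_def a_def)
  ultimately have "emp_df X n \<omega> (\<xi> - a) < p" "p \<le> emp_df X n \<omega> (\<xi> + a)"
    unfolding abs_less_iff by linarith+
  from quantile_between[OF emp_df_mono this] show ?thesis by (simp add: a_def abs_le_iff)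
qed

lemma grid_bracket:
  assumes n: "large n" and z: "\<bar>z - \<xi>\<bar> \<le> radius n"
  obtains k where "k \<in> {- int (grid_size n)..int (grid_size n)}" "k + 1 \<in> {- int (grid_size n)..int (grid_size n)}"
    "grid n k \<le> z" "z \<le> grid n (k + 1)" "grid n (k + 1) = grid n k + mesh n"
proof
  define k where "k = \<lfloor>(z - \<xi>) / mesh n\<rfloor>"
  have h: "0 < mesh n" by (rule mesh_pos[OF n])
  have k: "real_of_int k \<le> (z - \<xi>) / mesh n" "(z - \<xi>) / mesh n < real_of_int k + 1"
    by (simp_all add: k_def)
  then show "grid n k \<le> z" "z \<le> grid n (k + 1)"
    using h by (simp_all add: grid_def pos_le_divide_eq pos_divide_less_eq algebra_simps)
  show "grid n (k + 1) = grid n k + mesh n" by (simp add: grid_def algebra_simps)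
  have "\<bar>(z - \<xi>) / mesh n\<bar> \<le> radius n / mesh n" using z h by (simp add: abs_divide divide_right_mono)
  moreover have "radius n / mesh n \<le> of_int \<lceil>radius n / mesh n\<rceil>" by (rule le_of_int_ceiling)
  moreover have "real (grid_size n) = of_int \<lceil>radius n / mesh n\<rceil> + 1"
    using radius_nonneg[OF n] h by (simp add: grid_size_def)
  ultimately have "- real (grid_size n) \<le> real_of_int k" "real_of_int k + 1 \<le> real (grid_size n)"
    using k unfolding abs_le_iff by linarith+
  then show "k \<in> {- int (grid_size n)..int (grid_size n)}" "k + 1 \<in> {- int (grid_size n)..int (grid_size n)}"
    by auto
qed

lemma incr_dev_near_\<xi>_le:
  assumes n: "large n" and \<omega>: "\<omega> \<notin> bad_event n" "\<omega> \<in> space M" and z: "\<bar>z - \<xi>\<bar> \<le> radius n"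
  shows "\<bar>incr_dev n \<omega> z\<bar> \<le> incr_tol n + fB * mesh n"
proof -
  obtain k where k: "k \<in> {- int (grid_size n)..int (grid_size n)}" "k + 1 \<in> {- int (grid_size n)..int (grid_size n)}"
    and below: "grid n k \<le> z" and above: "z \<le> grid n (k + 1)" and step: "grid n (k + 1) = grid n k + mesh n"
    using grid_bracket[OF n z] .
  have in_grid: "\<bar>incr_dev n \<omega> (grid n j)\<bar> \<le> incr_tol n" if "j \<in> {- int (grid_size n)..int (grid_size n)}" for j
  proof -
    have "\<omega> \<notin> {\<omega>\<in>space M. incr_tol n \<le> \<bar>incr_dev n \<omega> (grid n j)\<bar>}"
      using \<omega>(1) that unfolding bad_event_def by blast
    then show ?thesis using \<omega>(2) by simp
  qed
  have z_dom: "z \<in> {\<xi>-d..\<xi>+d}" using z n mesh_pos[OF n] by (auto simp: large_def)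
  have "F (grid n (k + 1)) - F z \<le> fB * \<bar>grid n (k + 1) - z\<bar>"
    using F_lipschitz[OF z_dom grid_near_\<xi>(2)[OF n k(2)]] by simp
  also have "\<dots> \<le> fB * mesh n" using below above step fB_pos by (intro mult_left_mono) auto
  finally have "F (grid n (k + 1)) - F z \<le> fB * mesh n" .
  moreover have "F z - F (grid n k) \<le> fB * \<bar>z - grid n k\<bar>"
    using F_lipschitz[OF grid_near_\<xi>(2)[OF n k(1)] z_dom] by simp
  moreover have "fB * \<bar>z - grid n k\<bar> \<le> fB * mesh n"
    using below above step fB_pos by (intro mult_left_mono) auto
  ultimately have F_steps: "F (grid n (k + 1)) - F z \<le> fB * mesh n" "F z - F (grid n k) \<le> fB * mesh n"
    by linarith+
  show ?thesis unfolding incr_dev_def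
    by (rule abs_diff_le_between[where G="\<lambda>x. emp_df X n \<omega> x - emp_df X n \<omega> \<xi>" and H="\<lambda>x. F x - F \<xi>"
        and u="grid n k" and v="grid n (k + 1)"])
      (use F_steps in_grid[OF k(1)] in_grid[OF k(2)] emp_df_mono[OF below] emp_df_mono[OF above]
        in \<open>auto simp: incr_dev_def\<close>)
qed

lemma bahadur_error_bigo:
  "(\<lambda>n. (1 / real n + incr_tol n + fB * mesh n + Bd * (radius n)\<^sup>2) / f \<xi>)
    \<in> O(\<lambda>n. real n powr (-3/4) * ln (real n))"
proof -
  have "(\<lambda>n. 1 / real n) \<in> O(\<lambda>n. real n powr (-3/4) * ln (real n))"
    "(\<lambda>n. ln (real n) * sqrt (sqrt (real n)) / real n) \<in> O(\<lambda>n. real n powr (-3/4) * ln (real n))"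
    "(\<lambda>n. 1 / sqrt (sqrt (real n)) ^ 3) \<in> O(\<lambda>n. real n powr (-3/4) * ln (real n))"
    "(\<lambda>n. (ln (real n) / sqrt (real n))\<^sup>2) \<in> O(\<lambda>n. real n powr (-3/4) * ln (real n))"
    by real_asymp+
  then have "(\<lambda>n. 1 / f \<xi> * (1 / real n) + 2 * incr_const / f \<xi> * (ln (real n) * sqrt (sqrt (real n)) / real n)
      + fB / f \<xi> * (1 / sqrt (sqrt (real n)) ^ 3) + Bd * 144 / f \<xi> ^ 3 * (ln (real n) / sqrt (real n))\<^sup>2)
    \<in> O(\<lambda>n. real n powr (-3/4) * ln (real n))"
    by (intro sum_in_bigo bigo_const_mult)
  also have "(\<lambda>n. 1 / f \<xi> * (1 / real n) + 2 * incr_const / f \<xi> * (ln (real n) * sqrt (sqrt (real n)) / real n)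
      + fB / f \<xi> * (1 / sqrt (sqrt (real n)) ^ 3) + Bd * 144 / f \<xi> ^ 3 * (ln (real n) / sqrt (real n))\<^sup>2)
    = (\<lambda>n. (1 / real n + incr_tol n + fB * mesh n + Bd * (radius n)\<^sup>2) / f \<xi>)"
    using f_\<xi>_pos
    by (intro ext) (simp add: incr_tol_def mesh_def radius_def fourth_root_def power_divide field_simps
        power2_eq_square power3_eq_cube)
  finally show ?thesis .
qed

lemma bahadur_bound:
  assumes n: "large n" and \<omega>: "\<omega> \<notin> bad_event n" "\<omega> \<in> space M" and inj: "inj_on (\<lambda>i. X i \<omega>) {1..n}"
  shows "\<bar>quantile (emp_df X n \<omega>) p - (\<xi> - (emp_df X n \<omega> \<xi> - p) / f \<xi>)\<bar>
    \<le> (1 / real n + incr_tol n + fB * mesh n + Bd * (radius n)\<^sup>2) / f \<xi>"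
proof -
  define z where "z = quantile (emp_df X n \<omega>) p"
  have "n \<ge> 1" using n by (simp add: large_def)
  have "\<bar>z - \<xi>\<bar> \<le> radius n" unfolding z_def by (rule quantile_near_\<xi>[OF n \<omega>])
  have "p \<le> emp_df X n \<omega> z" "emp_df X n \<omega> z < p + 1 / real n"
    unfolding z_def using emp_df_quantile_ge[OF \<open>n \<ge> 1\<close> p] emp_df_quantile_less[where X=X and \<omega>=\<omega>, OF \<open>n \<ge> 1\<close> p inj] by auto
  moreover have "\<bar>incr_dev n \<omega> z\<bar> \<le> incr_tol n + fB * mesh n"
    by (rule incr_dev_near_\<xi>_le[OF n \<omega> \<open>\<bar>z - \<xi>\<bar> \<le> radius n\<close>])
  moreover have "\<bar>F z - p - f \<xi> * (z - \<xi>)\<bar> \<le> Bd * (radius n)\<^sup>2"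
    by (rule F_taylor_near_\<xi>[OF n \<open>\<bar>z - \<xi>\<bar> \<le> radius n\<close>])
  moreover have "f \<xi> * (z - (\<xi> - (emp_df X n \<omega> \<xi> - p) / f \<xi>))
      = (emp_df X n \<omega> z - p) - incr_dev n \<omega> z - (F z - p - f \<xi> * (z - \<xi>))"
    using f_\<xi>_pos F_\<xi> by (simp add: incr_dev_def field_simps)
  ultimately have "\<bar>f \<xi> * (z - (\<xi> - (emp_df X n \<omega> \<xi> - p) / f \<xi>))\<bar>
      \<le> 1 / real n + incr_tol n + fB * mesh n + Bd * (radius n)\<^sup>2"
    unfolding abs_le_iff abs_less_iff by linarith
  then show ?thesis using f_\<xi>_pos unfolding z_def by (simp add: abs_mult pos_le_divide_eq mult.commute)
qed

theorem bahadur_representation: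
  "AE \<omega> in M. (\<lambda>n. quantile (emp_df X n \<omega>) p - (\<xi> - (emp_df X n \<omega> \<xi> - p) / f \<xi>))
     \<in> O(\<lambda>n. real n powr (-3/4) * ln (real n))"
  using AE_eventually_not_bad no_ties AE_space
proof eventually_elim
  case (elim \<omega>)
  have "eventually (\<lambda>n. norm (quantile (emp_df X n \<omega>) p - (\<xi> - (emp_df X n \<omega> \<xi> - p) / f \<xi>))
      \<le> norm ((1 / real n + incr_tol n + fB * mesh n + Bd * (radius n)\<^sup>2) / f \<xi>)) at_top"
    using elim(1) eventually_large
  proof eventually_elim
    case (elim n)
    have "inj_on (\<lambda>i. X i \<omega>) {1..n}" using \<open>\<forall>n. inj_on (\<lambda>i. X i \<omega>) {1..n}\<close> by blast
    from order_trans[OF bahadur_bound[OF elim(2,1) \<open>\<omega> \<in> space M\<close> this] abs_ge_self]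
    show ?case by simp
  qed
  then show ?case by (rule landau_o.big_trans[OF landau_o.big_mono bahadur_error_bigo])
qed

end

theorem theorem2p2:
  fixes M :: "'a measure" and X :: "nat \<Rightarrow> 'a \<Rightarrow> real"
    and F f f' :: "real \<Rightarrow> real" and p :: real and N :: "real set"
  assumes "prob_space M"
    and rv: "\<And>i. X i \<in> borel_measurable M"
    and marginal: "\<And>i x. i \<ge> 1 \<Longrightarrow> measure M {\<omega> \<in> space M. X i \<omega> \<le> x} = F x"
    and mixing: "decseq (phi_mix M X)" "phi_mix M X \<longlonglongrightarrow> 0"
    and rate: "phi_mix M X \<in> O(\<lambda>n. real n powr (-3))"
    and ties: "\<And>i j. i \<ge> 1 \<Longrightarrow> j \<ge> 1 \<Longrightarrow> i \<noteq> j \<Longrightarrow>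
                 measure M {\<omega> \<in> space M. X i \<omega> = X j \<omega>} = 0"
    and p: "0 < p" "p < 1"
    and N: "open N" "quantile F p \<in> N"
    and dens: "\<And>x. x \<in> N \<Longrightarrow> (F has_real_derivative f x) (at x)"
    and fpos: "\<And>x. x \<in> N \<Longrightarrow> f x > 0"
    and fcont: "continuous_on N f"
    and fbdd: "bdd_above (f ` N)"
    and fderiv: "\<And>x. x \<in> N \<Longrightarrow> (f has_real_derivative f' x) (at x)"
    and f'bdd: "bounded (f' ` N)"
  shows "AE \<omega> in M.
     (\<lambda>n. quantile (emp_df X n \<omega>) p
          - (quantile F p - (emp_df X n \<omega> (quantile F p) - p) / f (quantile F p)))
     \<in> O(\<lambda>n. real n powr (-3/4) * ln (real n))"
proof -
  interpret prob_space M by fact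
  obtain Cp where Cp: "\<And>m. m \<ge> 1 \<Longrightarrow> phi_mix M X m \<le> Cp / real m ^ 3"
    using phi_mix_le_cubic_rate[OF rv rate] by blast
  obtain \<Phi> where \<Phi>: "\<And>D. (\<Sum>m=1..D. phi_mix M X m) \<le> \<Phi>"
    using sum_phi_mix_bounded[OF rv Cp] by blast
  obtain d where d: "d > 0" "{quantile F p - d..quantile F p + d} \<subseteq> N"
    using open_contains_cball[of N] N by (force simp: cball_eq_atLeastAtMost)
  obtain fB Bd where "\<And>x. x \<in> N \<Longrightarrow> f x \<le> fB" "\<And>x. x \<in> N \<Longrightarrow> \<bar>f' x\<bar> \<le> Bd"
    using fbdd f'bdd by (auto simp: bdd_above_def bounded_iff)
  moreover have "F (quantile F p) = p"
    using cdf_quantile_eq[OF _ _ _ p DERIV_isCont[OF dens[OF N(2)]]]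
      distribution_function_props[of "X 1" F] rv marginal[of 1] by auto
  ultimately interpret bahadur_setting M X F f f' p "quantile F p" d fB Bd Cp \<Phi>
    using AE_no_ties[OF rv ties] rv marginal p d Cp \<Phi> dens fderiv fpos N(2)
    by unfold_locales (auto simp: subset_iff less_imp_le)
  show ?thesis by (rule bahadur_representation)
qed

end
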